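(* Let $\{\mathcal M_\omega\}_{\omega\in\Omega}$ be a family of $\mathcal L$-structures, $\mathbf M=\prod_{\omega\in\Omega}M_\omega$, and let $E$ be an integration functional on $\mathcal A=[0,1]^\Omega$. Let $(\widehat{\mathbf M},\widehat{\mathcal A})$ be the $\mathcal L^R$-structure associated to $(\mathbf M,\mathcal A)$ and $[\cdot]$ the canonical map. Then $(\mathbf M,\mathcal A)$ is full, and for every $\mathcal L$-formula $\varphi(\bar x)$ and every $\bar{\mathbf a}\in\mathbf M^n$: $\big[\langle\varphi(\bar{\mathbf a})\rangle\big]=[\![\varphi([\bar{\mathbf a}])]\!]$ (the right-hand side computed in $(\widehat{\mathbf M},\widehat{\mathcal A})$).
   Context: $\mathcal L$ is a (single-sorted) signature of continuous first-order logic. An integration functional on $\mathcal A=[0,1]^\Omega$ is $E\colon\mathcal A\to[0,1]$ with $E(1)=1$ and $E(X+Y)=E(X)+E(Y)$ whenever $X,Y,X+Y\in\mathcal A$. For $\bar{\mathbf a}\in\mathbf M^n$ and a formula $\varphi$, $\langle\varphi(\bar{\mathbf a})\rangle\in[0,1]^\Omega$ is $\omega\mapsto\varphi^{\mathcal M_\omega}(\bar{\mathbf a}(\omega))$. The randomisation signature $\mathcal L^R$ has a main sort carrying all function symbols of $\mathcal L$ (same continuity moduli), an auxiliary sort carrying $\{0,\neg,\tfrac12,\dotminus\}$, and for each predicate symbol $P$ of $\mathcal L$ a function symbol $[\![P]\!]$ from the main sort(s) to the auxiliary sort. $(\mathbf M,\mathcal A)$ is an $\mathcal L^R$-pre-structure: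 function symbols act pointwise on $\mathbf M$, $[\![P]\!](\bar{\mathbf a})=\langle P(\bar{\mathbf a})\rangle$, connectives act pointwise on $\mathcal A$ ($\neg X=1-X$, $\tfrac12X=X/2$, $X\dotminus Y=\max(X-Y,0)$), with pseudo-metrics $d(\mathbf a,\mathbf b)=E\langle d(\mathbf a,\mathbf b)\rangle$ and $d(X,Y)=E|X-Y|$. The associated structure $(\widehat{\mathbf M},\widehat{\mathcal A})$ is the completion of the quotient by distance zero; $[\cdot]$ is the canonical map, and $\widehat{\mathcal A}\cong L^1(\mathcal F,[0,1])$ for a probability space. $(\mathbf M,\mathcal A)$ is full if for all $\mathbf a,\mathbf b\in\mathbf M$, $X\in\mathcal A$ there is $\mathbf c\in\mathbf M$ with $\mathbf c(\omega)=\mathbf a(\omega)$ when $X(\omega)=1$ and $\mathbf c(\omega)=\mathbf b(\omega)$ when $X(\omega)=0$. In a structure with main sort $\mathbf N$ and auxiliary sort $L^1(\mathcal F,[0,1])$, $[\![\varphi]\!]$ is defined by induction: $[\![P(\bar\tau)]\!]=[\![P]\!](\bar\tau)$; $[\![\varphi\dotminus\psi]\!]=[\![\varphi]\!]\dotminus[\![\psi]\!]$, etc.; $[\![\inf_y\varphi(\bar x,y)]\!](\bar{\mathbf a})$ is the infimum in the complete lattice $L^1(\mathcal F,[0,1])$ of $\{[\![\varphi(\bar{\mathbf a},\mathbf b)]\!]:\mathbf b\in\mathbf N\}$, and similarly for $\sup$. *)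

theory Defs
  imports "HOL-Analysis.Analysis"
begin

text \<open>The metric symbol
  d is treated separately (constructor Dist below).\<close>

record ('f, 'p) csig =
  farity :: "'f \<Rightarrow> nat"
  parity :: "'p \<Rightarrow> nat"
  fmod   :: "'f \<Rightarrow> real \<Rightarrow> real"
  pmod   :: "'p \<Rightarrow> real \<Rightarrow> real"

definition wf_csig :: "('f, 'p) csig \<Rightarrow> bool" where
  "wf_csig L \<longleftrightarrow> (\<forall>f e. e > 0 \<longrightarrow> fmod L f e > 0) \<and> (\<forall>p e. e > 0 \<longrightarrow> pmod L p e > 0)"

record ('m, 'f, 'p) lstruc =
  carrier :: "'m set"
  mdist   :: "'m \<Rightarrow> 'm \<Rightarrow> real"
  fint    :: "'f \<Rightarrow> 'm list \<Rightarrow> 'm"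
  pint    :: "'p \<Rightarrow> 'm list \<Rightarrow> real"

definition tuples :: "'a set \<Rightarrow> nat \<Rightarrow> 'a list set" where
  "tuples S n = {xs. set xs \<subseteq> S \<and> length xs = n}"

definition is_lstruc :: "('f, 'p) csig \<Rightarrow> ('m, 'f, 'p) lstruc \<Rightarrow> bool" where
  "is_lstruc L S \<longleftrightarrow>
     carrier S \<noteq> {} \<and>
     Metric_space (carrier S) (mdist S) \<and>
     Metric_space.mcomplete (carrier S) (mdist S) \<and>
     (\<forall>x\<in>carrier S. \<forall>y\<in>carrier S. mdist S x y \<le> 1) \<and>
     (\<forall>f. \<forall>xs\<in>tuples (carrier S) (farity L f). fint S f xs \<in> carrier S) \<and>
     (\<forall>p. \<forall>xs\<in>tuples (carrier S) (parity L p). pint S p xs \<in> {0..1}) \<and>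
     (\<forall>f e. e > 0 \<longrightarrow> (\<forall>xs\<in>tuples (carrier S) (farity L f). \<forall>ys\<in>tuples (carrier S) (farity L f).
         list_all2 (\<lambda>x y. mdist S x y < fmod L f e) xs ys \<longrightarrow> mdist S (fint S f xs) (fint S f ys) \<le> e)) \<and>
     (\<forall>p e. e > 0 \<longrightarrow> (\<forall>xs\<in>tuples (carrier S) (parity L p). \<forall>ys\<in>tuples (carrier S) (parity L p).
         list_all2 (\<lambda>x y. mdist S x y < pmod L p e) xs ys \<longrightarrow> \<bar>pint S p xs - pint S p ys\<bar> \<le> e))"

datatype 'f trm = Var nat | Fn 'f "'f trm list"

datatype ('f, 'p) fml =
    Pred 'p "'f trm list"
  | Dist "'f trm" "'f trm"
  | Zero
  | Neg "('f, 'p) fml"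
  | Half "('f, 'p) fml"
  | Minus "('f, 'p) fml" "('f, 'p) fml"
  | Sup nat "('f, 'p) fml"
  | Inf nat "('f, 'p) fml"

fun wf_trm :: "('f, 'p) csig \<Rightarrow> 'f trm \<Rightarrow> bool" where
  "wf_trm L (Var i) = True"
| "wf_trm L (Fn f ts) = (length ts = farity L f \<and> (\<forall>t\<in>set ts. wf_trm L t))"

fun wf_fml :: "('f, 'p) csig \<Rightarrow> ('f, 'p) fml \<Rightarrow> bool" where
  "wf_fml L (Pred p ts) = (length ts = parity L p \<and> (\<forall>t\<in>set ts. wf_trm L t))"
| "wf_fml L (Dist t u) = (wf_trm L t \<and> wf_trm L u)"
| "wf_fml L Zero = True"
| "wf_fml L (Neg \<phi>) = wf_fml L \<phi>"
| "wf_fml L (Half \<phi>) = wf_fml L \<phi>"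
| "wf_fml L (Minus \<phi> \<psi>) = (wf_fml L \<phi> \<and> wf_fml L \<psi>)"
| "wf_fml L (Sup x \<phi>) = wf_fml L \<phi>"
| "wf_fml L (Inf x \<phi>) = wf_fml L \<phi>"

fun tval :: "('m, 'f, 'p) lstruc \<Rightarrow> (nat \<Rightarrow> 'm) \<Rightarrow> 'f trm \<Rightarrow> 'm" where
  "tval S \<sigma> (Var i) = \<sigma> i"
| "tval S \<sigma> (Fn f ts) = fint S f (map (tval S \<sigma>) ts)"

fun fval :: "('m, 'f, 'p) lstruc \<Rightarrow> (nat \<Rightarrow> 'm) \<Rightarrow> ('f, 'p) fml \<Rightarrow> real" where
  "fval S \<sigma> (Pred p ts) = pint S p (map (tval S \<sigma>) ts)"
| "fval S \<sigma> (Dist t u) = mdist S (tval S \<sigma> t) (tval S \<sigma> u)"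
| "fval S \<sigma> Zero = 0"
| "fval S \<sigma> (Neg \<phi>) = 1 - fval S \<sigma> \<phi>"
| "fval S \<sigma> (Half \<phi>) = fval S \<sigma> \<phi> / 2"
| "fval S \<sigma> (Minus \<phi> \<psi>) = max (fval S \<sigma> \<phi> - fval S \<sigma> \<psi>) 0"
| "fval S \<sigma> (Sup x \<phi>) = (SUP b\<in>carrier S. fval S (\<sigma>(x := b)) \<phi>)"
| "fval S \<sigma> (Inf x \<phi>) = (INF b\<in>carrier S. fval S (\<sigma>(x := b)) \<phi>)"

definition prodM :: "('w \<Rightarrow> ('m, 'f, 'p) lstruc) \<Rightarrow> ('w \<Rightarrow> 'm) set" where
  "prodM Ms = {a. \<forall>w. a w \<in> carrier (Ms w)}"

definition unitA :: "('w \<Rightarrow> real) set" where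
  "unitA = {X. \<forall>w. X w \<in> {0..1}}"

definition integration_functional :: "(('w \<Rightarrow> real) \<Rightarrow> real) \<Rightarrow> bool" where
  "integration_functional E \<longleftrightarrow>
     (\<forall>X\<in>unitA. E X \<in> {0..1}) \<and> E (\<lambda>w. 1) = 1 \<and>
     (\<forall>X Y. X \<in> unitA \<longrightarrow> Y \<in> unitA \<longrightarrow> (\<lambda>w. X w + Y w) \<in> unitA \<longrightarrow>
        E (\<lambda>w. X w + Y w) = E X + E Y)"

definition pw_fun :: "('w \<Rightarrow> ('m, 'f, 'p) lstruc) \<Rightarrow> 'f \<Rightarrow> ('w \<Rightarrow> 'm) list \<Rightarrow> ('w \<Rightarrow> 'm)" where
  "pw_fun Ms f as = (\<lambda>w. fint (Ms w) f (map (\<lambda>a. a w) as))"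

definition pw_pred :: "('w \<Rightarrow> ('m, 'f, 'p) lstruc) \<Rightarrow> 'p \<Rightarrow> ('w \<Rightarrow> 'm) list \<Rightarrow> ('w \<Rightarrow> real)" where
  "pw_pred Ms p as = (\<lambda>w. pint (Ms w) p (map (\<lambda>a. a w) as))"

definition pw_dist :: "('w \<Rightarrow> ('m, 'f, 'p) lstruc) \<Rightarrow> ('w \<Rightarrow> 'm) \<Rightarrow> ('w \<Rightarrow> 'm) \<Rightarrow> ('w \<Rightarrow> real)" where
  "pw_dist Ms a b = (\<lambda>w. mdist (Ms w) (a w) (b w))"

text \<open>The random variable \<langle>phi(a)\<rangle> : w \<mapsto> phi^{M_w}(a(w)).\<close>
definition rv_fml :: "('w \<Rightarrow> ('m, 'f, 'p) lstruc) \<Rightarrow> (nat \<Rightarrow> ('w \<Rightarrow> 'm)) \<Rightarrow> ('f, 'p) fml \<Rightarrow> ('w \<Rightarrow> real)" where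
  "rv_fml Ms as \<phi> = (\<lambda>w. fval (Ms w) (\<lambda>i. as i w) \<phi>)"

definition dM :: "(('w \<Rightarrow> real) \<Rightarrow> real) \<Rightarrow> ('w \<Rightarrow> ('m, 'f, 'p) lstruc) \<Rightarrow> ('w \<Rightarrow> 'm) \<Rightarrow> ('w \<Rightarrow> 'm) \<Rightarrow> real" where
  "dM E Ms a b = E (pw_dist Ms a b)"

definition dA :: "(('w \<Rightarrow> real) \<Rightarrow> real) \<Rightarrow> ('w \<Rightarrow> real) \<Rightarrow> ('w \<Rightarrow> real) \<Rightarrow> real" where
  "dA E X Y = E (\<lambda>w. \<bar>X w - Y w\<bar>)"

definition full :: "('w \<Rightarrow> 'm) set \<Rightarrow> ('w \<Rightarrow> real) set \<Rightarrow> bool" where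
  "full M A \<longleftrightarrow> (\<forall>a\<in>M. \<forall>b\<in>M. \<forall>X\<in>A. \<exists>c\<in>M. \<forall>w.
      (X w = 1 \<longrightarrow> c w = a w) \<and> (X w = 0 \<longrightarrow> c w = b w))"

record ('n, 'b, 'f, 'p) rstruc =
  mainN  :: "'n set"
  distN  :: "'n \<Rightarrow> 'n \<Rightarrow> real"
  auxB   :: "'b set"
  distB  :: "'b \<Rightarrow> 'b \<Rightarrow> real"
  funN   :: "'f \<Rightarrow> 'n list \<Rightarrow> 'n"
  predN  :: "'p \<Rightarrow> 'n list \<Rightarrow> 'b"
  dsymN  :: "'n \<Rightarrow> 'n \<Rightarrow> 'b"
  zeroB  :: "'b"
  negB   :: "'b \<Rightarrow> 'b"
  halfB  :: "'b \<Rightarrow> 'b"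
  minusB :: "'b \<Rightarrow> 'b \<Rightarrow> 'b"

definition cont_tuples :: "'a set \<Rightarrow> ('a \<Rightarrow> 'a \<Rightarrow> real) \<Rightarrow> nat \<Rightarrow> ('b \<Rightarrow> 'b \<Rightarrow> real) \<Rightarrow> ('a list \<Rightarrow> 'b) \<Rightarrow> bool" where
  "cont_tuples S d n d' g \<longleftrightarrow>
     (\<forall>xs\<in>tuples S n. \<forall>e>0. \<exists>\<delta>>0. \<forall>ys\<in>tuples S n.
        list_all2 (\<lambda>x y. d x y < \<delta>) xs ys \<longrightarrow> d' (g xs) (g ys) < e)"

text \<open>The completion of the quotient by distance zero: a complete metric space
  with a distance-preserving map (the canonical map) with dense image.\<close>
definition is_completion :: "'a set \<Rightarrow> ('a \<Rightarrow> 'a \<Rightarrow> real) \<Rightarrow> 'c set \<Rightarrow> ('c \<Rightarrow> 'c \<Rightarrow> real) \<Rightarrow> ('a \<Rightarrow> 'c) \<Rightarrow> bool" where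
  "is_completion S d T d' e \<longleftrightarrow>
     Metric_space T d' \<and> Metric_space.mcomplete T d' \<and>
     e ` S \<subseteq> T \<and> (\<forall>x\<in>S. \<forall>y\<in>S. d' (e x) (e y) = d x y) \<and>
     (\<forall>z\<in>T. \<forall>\<epsilon>>0. \<exists>x\<in>S. d' z (e x) < \<epsilon>)"

text \<open>(R, cM, cA) is the L^R-structure associated to the pre-structure (M, A):
  both sorts are completions of the quotients, with canonical maps cM and cA,
  and all symbols are interpreted by the (unique) continuous extensions of the
  pointwise operations of the pre-structure.\<close>
definition is_assoc_struct ::
  "('f, 'p) csig \<Rightarrow> ('w \<Rightarrow> ('m, 'f, 'p) lstruc) \<Rightarrow> (('w \<Rightarrow> real) \<Rightarrow> real) \<Rightarrow>
   ('n, 'b, 'f, 'p) rstruc \<Rightarrow> (('w \<Rightarrow> 'm) \<Rightarrow> 'n) \<Rightarrow> (('w \<Rightarrow> real) \<Rightarrow> 'b) \<Rightarrow> bool" where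
  "is_assoc_struct L Ms E R cM cA \<longleftrightarrow>
     is_completion (prodM Ms) (dM E Ms) (mainN R) (distN R) cM \<and>
     is_completion unitA (dA E) (auxB R) (distB R) cA \<and>
     (\<forall>f. (\<forall>xs\<in>tuples (mainN R) (farity L f). funN R f xs \<in> mainN R) \<and>
          (\<forall>as\<in>tuples (prodM Ms) (farity L f). funN R f (map cM as) = cM (pw_fun Ms f as)) \<and>
          cont_tuples (mainN R) (distN R) (farity L f) (distN R) (funN R f)) \<and>
     (\<forall>p. (\<forall>xs\<in>tuples (mainN R) (parity L p). predN R p xs \<in> auxB R) \<and>
          (\<forall>as\<in>tuples (prodM Ms) (parity L p). predN R p (map cM as) = cA (pw_pred Ms p as)) \<and>
          cont_tuples (mainN R) (distN R) (parity L p) (distB R) (predN R p)) \<and>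
     (\<forall>x\<in>mainN R. \<forall>y\<in>mainN R. dsymN R x y \<in> auxB R) \<and>
     (\<forall>a\<in>prodM Ms. \<forall>b\<in>prodM Ms. dsymN R (cM a) (cM b) = cA (pw_dist Ms a b)) \<and>
     cont_tuples (mainN R) (distN R) 2 (distB R) (\<lambda>xs. dsymN R (xs ! 0) (xs ! 1)) \<and>
     zeroB R = cA (\<lambda>w. 0) \<and>
     (\<forall>x\<in>auxB R. negB R x \<in> auxB R \<and> halfB R x \<in> auxB R) \<and>
     (\<forall>x\<in>auxB R. \<forall>y\<in>auxB R. minusB R x y \<in> auxB R) \<and>
     (\<forall>X\<in>unitA. negB R (cA X) = cA (\<lambda>w. 1 - X w)) \<and>
     (\<forall>X\<in>unitA. halfB R (cA X) = cA (\<lambda>w. X w / 2)) \<and>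
     (\<forall>X\<in>unitA. \<forall>Y\<in>unitA. minusB R (cA X) (cA Y) = cA (\<lambda>w. max (X w - Y w) 0)) \<and>
     cont_tuples (auxB R) (distB R) 1 (distB R) (\<lambda>xs. negB R (xs ! 0)) \<and>
     cont_tuples (auxB R) (distB R) 1 (distB R) (\<lambda>xs. halfB R (xs ! 0)) \<and>
     cont_tuples (auxB R) (distB R) 2 (distB R) (\<lambda>xs. minusB R (xs ! 0) (xs ! 1))"

text \<open>The lattice order of the auxiliary sort (which is isomorphic to
  L^1(F,[0,1]) as a structure in the connectives): X \<le> Y iff X -. Y = 0.
  Infima / suprema in this complete lattice.\<close>
definition leB :: "('n, 'b, 'f, 'p) rstruc \<Rightarrow> 'b \<Rightarrow> 'b \<Rightarrow> bool" where
  "leB R X Y \<longleftrightarrow> minusB R X Y = zeroB R"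

definition InfB :: "('n, 'b, 'f, 'p) rstruc \<Rightarrow> 'b set \<Rightarrow> 'b" where
  "InfB R S = (THE z. z \<in> auxB R \<and> (\<forall>s\<in>S. leB R z s) \<and>
                      (\<forall>u\<in>auxB R. (\<forall>s\<in>S. leB R u s) \<longrightarrow> leB R u z))"

definition SupB :: "('n, 'b, 'f, 'p) rstruc \<Rightarrow> 'b set \<Rightarrow> 'b" where
  "SupB R S = (THE z. z \<in> auxB R \<and> (\<forall>s\<in>S. leB R s z) \<and>
                      (\<forall>u\<in>auxB R. (\<forall>s\<in>S. leB R s u) \<longrightarrow> leB R z u))"

text \<open>The interpretation [[phi]] in the L^R-structure R.\<close>
fun tvalR :: "('n, 'b, 'f, 'p) rstruc \<Rightarrow> (nat \<Rightarrow> 'n) \<Rightarrow> 'f trm \<Rightarrow> 'n" where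
  "tvalR R \<tau> (Var i) = \<tau> i"
| "tvalR R \<tau> (Fn f ts) = funN R f (map (tvalR R \<tau>) ts)"

fun fvalR :: "('n, 'b, 'f, 'p) rstruc \<Rightarrow> (nat \<Rightarrow> 'n) \<Rightarrow> ('f, 'p) fml \<Rightarrow> 'b" where
  "fvalR R \<tau> (Pred p ts) = predN R p (map (tvalR R \<tau>) ts)"
| "fvalR R \<tau> (Dist t u) = dsymN R (tvalR R \<tau> t) (tvalR R \<tau> u)"
| "fvalR R \<tau> Zero = zeroB R"
| "fvalR R \<tau> (Neg \<phi>) = negB R (fvalR R \<tau> \<phi>)"
| "fvalR R \<tau> (Half \<phi>) = halfB R (fvalR R \<tau> \<phi>)"
| "fvalR R \<tau> (Minus \<phi> \<psi>) = minusB R (fvalR R \<tau> \<phi>) (fvalR R \<tau> \<psi>)"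
| "fvalR R \<tau> (Sup x \<phi>) = SupB R ((\<lambda>b. fvalR R (\<tau>(x := b)) \<phi>) ` mainN R)"
| "fvalR R \<tau> (Inf x \<phi>) = InfB R ((\<lambda>b. fvalR R (\<tau>(x := b)) \<phi>) ` mainN R)"

end

theory Submission
  imports Defs
begin

text \<open>Fullness holds because the pre-structure is a full product. For the identity, one
  first shows that the random value of a formula depends E-uniformly continuously on the
  assignment: for symbols and connectives this combines their moduli of uniform continuity
  with Markov's inequality for E, and for sup and inf one picks near-optimal witnesses
  separately in each coordinate, which the product allows. Then, by induction on the
  formula, its interpretation in the associated structure at an assignment \<tau> of the
  completion is the limit of the classes of the random values along every sequence of
  assignments approximating \<tau>: the symbols and connectives of the associated structure
  are continuous, and for sup (inf) the limit is the lattice supremum (infimum), an upper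
  bound because the order is closed and the least one because the values at the
  pointwise near-optimal witnesses converge to it. The constant sequence gives the
  theorem.\<close>

section \<open>Integration functionals\<close>

locale integration =
  fixes E :: "('w \<Rightarrow> real) \<Rightarrow> real"
  assumes integration_functional: "integration_functional E"
begin

lemma E_nonneg: "X \<in> unitA \<Longrightarrow> 0 \<le> E X"
  using integration_functional unfolding integration_functional_def by auto

lemma E_add:
  "X \<in> unitA \<Longrightarrow> Y \<in> unitA \<Longrightarrow> (\<lambda>w. X w + Y w) \<in> unitA \<Longrightarrow> E (\<lambda>w. X w + Y w) = E X + E Y"
  using integration_functional unfolding integration_functional_def by blast

lemma E_one: "E (\<lambda>w. 1) = 1"
  using integration_functional unfolding integration_functional_def by blast

lemma E_zero: "E (\<lambda>w. 0) = 0"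
  using E_add[of "\<lambda>w. 0" "\<lambda>w. 0"] by (simp add: unitA_def)

lemma E_mono:
  assumes "X \<in> unitA" "Y \<in> unitA" "\<And>w. X w \<le> Y w"
  shows "E X \<le> E Y"
proof -
  have D: "(\<lambda>w. Y w - X w) \<in> unitA"
    using assms unfolding unitA_def by (auto simp: diff_le_eq intro: order_trans)
  have "E Y = E X + E (\<lambda>w. Y w - X w)"
    using E_add[OF assms(1) D] assms(2) by simp
  then show ?thesis
    using E_nonneg[OF D] by simp
qed

lemma E_subadditive:
  assumes "X \<in> unitA" "Y \<in> unitA" "Z \<in> unitA" "\<And>w. Z w \<le> X w + Y w"
  shows "E Z \<le> E X + E Y"
proof -
  let ?A = "\<lambda>w. min (Z w) (X w)" and ?B = "\<lambda>w. Z w - min (Z w) (X w)"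
  have "?A w \<in> {0..1} \<and> ?B w \<in> {0..1}" for w
    using assms(1,3) unfolding unitA_def by (auto simp: min_def dest!: spec[of _ w])
  then have A: "?A \<in> unitA" and B: "?B \<in> unitA"
    unfolding unitA_def by auto
  have "E Z = E ?A + E ?B"
    using E_add[OF A B] assms(3) by simp
  moreover have "E ?A \<le> E X"
    by (rule E_mono[OF A assms(1)]) simp
  moreover have "E ?B \<le> E Y"
  proof (rule E_mono[OF B assms(2)])
    fix w
    show "?B w \<le> Y w"
      using assms(2) assms(4)[of w] unfolding unitA_def by (auto simp: min_def)
  qed
  ultimately show ?thesis
    by simp
qed

lemma E_of_nat_mult:
  assumes "Z \<in> unitA" "(\<lambda>w. real k * Z w) \<in> unitA"
  shows "E (\<lambda>w. real k * Z w) = real k * E Z"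
  using assms(2)
proof (induction k)
  case 0
  then show ?case
    using E_zero by simp
next
  case (Suc k)
  have kZ: "(\<lambda>w. real k * Z w) \<in> unitA"
    using assms(1) Suc.prems unfolding unitA_def
    by (auto intro: order_trans[OF mult_right_mono[of "real k" "real (Suc k)"]])
  have "E (\<lambda>w. real k * Z w + Z w) = E (\<lambda>w. real k * Z w) + E Z"
    by (rule E_add[OF kZ assms(1)]) (use Suc.prems in \<open>simp add: algebra_simps\<close>)
  then show ?case
    using Suc.IH[OF kZ] by (simp add: algebra_simps)
qed

lemma E_le_of_nat_mult:
  assumes "X \<in> unitA" "Y \<in> unitA" "1 \<le> k" "\<And>w. X w \<le> real k * Y w"
  shows "E X \<le> real k * E Y"
proof -
  let ?Z = "\<lambda>w. X w / real k"
  have Z: "?Z \<in> unitA"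
    using assms(1,3) unfolding unitA_def by (auto simp: divide_le_eq intro: order_trans[of _ 1])
  have "(\<lambda>w. real k * ?Z w) = X"
    using assms(3) by auto
  then have "E X = real k * E ?Z"
    using E_of_nat_mult[OF Z, of k] assms(1) by simp
  also have "\<dots> \<le> real k * E Y"
    using E_mono[OF Z assms(2)] assms(3,4) by (simp add: divide_le_eq mult.commute)
  finally show ?thesis .
qed

lemma E_const_inverse: "E (\<lambda>w. 1 / real (Suc n)) = 1 / real (Suc n)"
proof -
  have "1 = real (Suc n) * E (\<lambda>w. 1 / real (Suc n))"
    using E_of_nat_mult[of "\<lambda>w. 1 / real (Suc n)" "Suc n"] E_one by (simp add: unitA_def)
  then show ?thesis
    by (simp add: field_simps)
qed

lemma E_markov:
  assumes "X \<in> unitA" "1 \<le> real N * \<eta>"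
  shows "E (\<lambda>w. if \<eta> \<le> X w then 1 else 0) \<le> real N * E X"
proof (rule E_le_of_nat_mult[OF _ assms(1)])
  show "1 \<le> N"
    using assms(2) by (cases N) auto
  fix w
  have "\<eta> \<le> X w \<Longrightarrow> 1 \<le> real N * X w"
    using assms(2) mult_left_mono[of \<eta> "X w" "real N"] by linarith
  then show "(if \<eta> \<le> X w then 1 else 0) \<le> real N * X w"
    using assms(1) unfolding unitA_def by auto
qed (simp add: unitA_def)

lemma E_indicator_exists_le:
  assumes "\<forall>D\<in>set Ds. D \<in> unitA" "1 \<le> real N * \<eta>"
  shows "E (\<lambda>w. if \<exists>D\<in>set Ds. \<eta> \<le> D w then 1 else 0) \<le> real N * (\<Sum>D\<leftarrow>Ds. E D)"
  using assms(1)
proof (induction Ds)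
  case Nil
  then show ?case
    using E_zero by simp
next
  case (Cons D Ds)
  have "E (\<lambda>w. if \<exists>D'\<in>set (D # Ds). \<eta> \<le> D' w then 1 else 0)
      \<le> E (\<lambda>w. if \<eta> \<le> D w then 1 else 0) + E (\<lambda>w. if \<exists>D'\<in>set Ds. \<eta> \<le> D' w then 1 else 0)"
    by (rule E_subadditive) (auto simp: unitA_def)
  then show ?case
    using E_markov[OF _ assms(2), of D] Cons by (simp add: distrib_left)
qed

lemma E_le_by_modulus:
  assumes "Z \<in> unitA" "\<forall>D\<in>set Ds. D \<in> unitA" "0 \<le> c" "c \<le> 1" "1 \<le> real N * \<eta>"
    "\<And>w. \<forall>D\<in>set Ds. D w < \<eta> \<Longrightarrow> Z w \<le> c"
  shows "E Z \<le> E (\<lambda>w. c) + real N * (\<Sum>D\<leftarrow>Ds. E D)"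
proof -
  let ?Y = "\<lambda>w. if \<exists>D\<in>set Ds. \<eta> \<le> D w then 1 else 0"
  have "E Z \<le> E (\<lambda>w. c) + E ?Y"
  proof (rule E_subadditive[OF _ _ assms(1)])
    fix w
    have "Z w \<le> 1"
      using assms(1) unfolding unitA_def by auto
    then show "Z w \<le> c + ?Y w"
      using assms(3) assms(6)[of w] by (cases "\<exists>D\<in>set Ds. \<eta> \<le> D w") force+
  qed (use assms(3,4) in \<open>auto simp: unitA_def\<close>)
  then show ?thesis
    using E_indicator_exists_le[OF assms(2,5)] by simp
qed

end

lemma SUP_unit_interval:
  fixes f :: "'a \<Rightarrow> real"
  assumes "S \<noteq> {}" "\<And>x. x \<in> S \<Longrightarrow> f x \<in> {0..1}"
  shows "(SUP x\<in>S. f x) \<in> {0..1}"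
proof -
  obtain x where "x \<in> S"
    using assms(1) by blast
  moreover have "bdd_above (f ` S)"
    using assms(2) by (intro bdd_aboveI[of _ 1]) auto
  ultimately have "f x \<le> (SUP x\<in>S. f x)"
    by (rule cSUP_upper)
  moreover have "(SUP x\<in>S. f x) \<le> 1"
    using assms by (intro cSUP_least) auto
  ultimately show ?thesis
    using assms(2)[OF \<open>x \<in> S\<close>] by simp
qed

lemma INF_unit_interval:
  fixes f :: "'a \<Rightarrow> real"
  assumes "S \<noteq> {}" "\<And>x. x \<in> S \<Longrightarrow> f x \<in> {0..1}"
  shows "(INF x\<in>S. f x) \<in> {0..1}"
proof -
  obtain x where "x \<in> S"
    using assms(1) by blast
  moreover have "bdd_below (f ` S)"
    using assms(2) by (intro bdd_belowI[of _ 0]) auto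
  ultimately have "(INF x\<in>S. f x) \<le> f x"
    by (rule cINF_lower[rotated])
  moreover have "0 \<le> (INF x\<in>S. f x)"
    using assms by (intro cINF_greatest) auto
  ultimately show ?thesis
    using assms(2)[OF \<open>x \<in> S\<close>] by simp
qed

lemma abs_SUP_diff_witness:
  fixes f g :: "'a \<Rightarrow> real"
  assumes "S \<noteq> {}" "bdd_above (f ` S)" "bdd_above (g ` S)" "0 < c"
  shows "\<exists>m\<in>S. \<bar>(SUP x\<in>S. f x) - (SUP x\<in>S. g x)\<bar> \<le> \<bar>f m - g m\<bar> + c"
proof -
  have witness: "\<exists>m\<in>S. (SUP x\<in>S. h x) - (SUP x\<in>S. k x) \<le> h m - k m + c"
    if hk: "bdd_above (h ` S)" "bdd_above (k ` S)" for h k :: "'a \<Rightarrow> real"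
  proof -
    obtain m where m: "m \<in> S" "(SUP x\<in>S. h x) - c < h m"
      using less_cSUP_iff[OF assms(1) hk(1), of "(SUP x\<in>S. h x) - c"] assms(4) by auto
    then show ?thesis
      using cSUP_upper[OF m(1) hk(2)] by force
  qed
  show ?thesis
  proof (cases "(SUP x\<in>S. g x) \<le> (SUP x\<in>S. f x)")
    case True
    then show ?thesis
      using witness[OF assms(2,3)] by force
  next
    case False
    then show ?thesis
      using witness[OF assms(3,2)] by force
  qed
qed

lemma abs_INF_diff_witness:
  fixes f g :: "'a \<Rightarrow> real"
  assumes "S \<noteq> {}" "bdd_below (f ` S)" "bdd_below (g ` S)" "0 < c"
  shows "\<exists>m\<in>S. \<bar>(INF x\<in>S. f x) - (INF x\<in>S. g x)\<bar> \<le> \<bar>f m - g m\<bar> + c"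
proof -
  have INF_eq: "(INF x\<in>S. h x) = - (SUP x\<in>S. - h x)" for h :: "'a \<Rightarrow> real"
    by (simp add: Inf_real_def image_image)
  have "bdd_above ((\<lambda>x. - f x) ` S)" "bdd_above ((\<lambda>x. - g x) ` S)"
    using assms(2,3) by (simp_all add: bdd_above_uminus_image)
  from abs_SUP_diff_witness[OF assms(1) this assms(4)] show ?thesis
    unfolding INF_eq by (simp add: abs_minus_commute)
qed

lemma abs_max_diff_le: "\<bar>max (a - b) 0 - max (a' - b') 0\<bar> \<le> \<bar>a - a'\<bar> + \<bar>b - b'\<bar>" for a b a' b' :: real
  by (simp add: max_def abs_le_iff) linarith

lemma (in Metric_space) mdist_diff_le:
  assumes "a \<in> M" "b \<in> M" "a' \<in> M" "b' \<in> M"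
  shows "\<bar>d a b - d a' b'\<bar> \<le> d a a' + d b b'"
  using triangle[of a a' b] triangle[of a' b' b] triangle[of a' a b'] triangle[of a b b']
    commute[of a a'] commute[of b b'] assms by (simp add: abs_le_iff; linarith)

lemma (in Metric_space) limitin_close_sequence:
  assumes "limitin mtopology t v sequentially" "\<And>n. s n \<in> M" "\<And>n. t n \<in> M"
    and "(\<lambda>n. d (s n) (t n)) \<longlonglongrightarrow> 0"
  shows "limitin mtopology s v sequentially"
proof -
  have v: "v \<in> M" and "(\<lambda>n. d (t n) v) \<longlonglongrightarrow> 0"
    using assms(1) unfolding limitin_metric_dist_null by auto
  with assms(4) have bound: "(\<lambda>n. d (s n) (t n) + d (t n) v) \<longlonglongrightarrow> 0"
    using tendsto_add_zero by blast
  have "(\<lambda>n. d (s n) v) \<longlonglongrightarrow> 0"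
    by (rule real_tendsto_sandwich[OF _ _ tendsto_const bound])
      (use triangle assms(2,3) v in \<open>auto intro!: always_eventually\<close>)
  then show ?thesis
    unfolding limitin_metric_dist_null using v assms(2) by simp
qed

lemma (in Metric_space) limitin_mdist:
  assumes "limitin mtopology a x sequentially" "limitin mtopology b y sequentially"
    and "\<And>n. a n \<in> M" "\<And>n. b n \<in> M"
  shows "(\<lambda>n. d (a n) (b n)) \<longlonglongrightarrow> d x y"
proof -
  have xy: "x \<in> M" "y \<in> M" and "(\<lambda>n. d (a n) x) \<longlonglongrightarrow> 0" "(\<lambda>n. d (b n) y) \<longlonglongrightarrow> 0"
    using assms(1,2) unfolding limitin_metric_dist_null by auto
  then have bound: "(\<lambda>n. d (a n) x + d (b n) y) \<longlonglongrightarrow> 0"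
    using tendsto_add_zero by blast
  have "(\<lambda>n. \<bar>d (a n) (b n) - d x y\<bar>) \<longlonglongrightarrow> 0"
    by (rule real_tendsto_sandwich[OF _ _ tendsto_const bound])
      (use mdist_diff_le assms(3,4) xy in \<open>auto intro!: always_eventually\<close>)
  then show ?thesis
    by (simp add: tendsto_rabs_zero_iff LIM_zero_iff)
qed

lemma limitin_cont_tuples:
  assumes S: "Metric_space S d" and T: "Metric_space T d'"
    and cont: "cont_tuples S d n d' g" and closed: "\<And>zs. zs \<in> tuples S n \<Longrightarrow> g zs \<in> T"
    and xs: "xs \<in> tuples S n" and ys: "\<And>k. ys k \<in> tuples S n"
    and lim: "\<And>j. j < n \<Longrightarrow> limitin (Metric_space.mtopology S d) (\<lambda>k. ys k ! j) (xs ! j) sequentially"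
  shows "limitin (Metric_space.mtopology T d') (\<lambda>k. g (ys k)) (g xs) sequentially"
  unfolding Metric_space.limitin_metric[OF T]
proof (intro conjI allI impI)
  show "g xs \<in> T"
    by (rule closed[OF xs])
  fix \<epsilon> :: real
  assume "0 < \<epsilon>"
  then obtain \<delta> where "0 < \<delta>"
    and \<delta>: "\<And>zs. zs \<in> tuples S n \<Longrightarrow> list_all2 (\<lambda>x y. d x y < \<delta>) xs zs \<Longrightarrow> d' (g xs) (g zs) < \<epsilon>"
    using cont xs unfolding cont_tuples_def by blast
  have "\<forall>j\<in>{..<n}. \<forall>\<^sub>F k in sequentially. d (ys k ! j) (xs ! j) < \<delta>"
  proof
    fix j
    assume "j \<in> {..<n}"
    then have "\<forall>\<^sub>F k in sequentially. ys k ! j \<in> S \<and> d (ys k ! j) (xs ! j) < \<delta>"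
      using lim \<open>0 < \<delta>\<close> unfolding Metric_space.limitin_metric[OF S] by auto
    then show "\<forall>\<^sub>F k in sequentially. d (ys k ! j) (xs ! j) < \<delta>"
      by (rule eventually_mono) simp
  qed
  then have "\<forall>\<^sub>F k in sequentially. \<forall>j\<in>{..<n}. d (ys k ! j) (xs ! j) < \<delta>"
    by (rule eventually_ball_finite[OF finite_lessThan])
  then show "\<forall>\<^sub>F k in sequentially. g (ys k) \<in> T \<and> d' (g (ys k)) (g xs) < \<epsilon>"
  proof (rule eventually_mono)
    fix k
    assume "\<forall>j\<in>{..<n}. d (ys k ! j) (xs ! j) < \<delta>"
    then have "list_all2 (\<lambda>x y. d x y < \<delta>) xs (ys k)"
      using xs ys[of k] Metric_space.commute[OF S] nth_mem
      by (auto simp: tuples_def list_all2_conv_all_nth subset_iff)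
    then show "g (ys k) \<in> T \<and> d' (g (ys k)) (g xs) < \<epsilon>"
      using \<delta>[OF ys] closed[OF ys] Metric_space.commute[OF T] closed[OF xs] by metis
  qed
qed

lemma is_completionD:
  assumes "is_completion S d T d' e"
  shows completion_metric: "Metric_space T d'"
    and completion_complete: "Metric_space.mcomplete T d'"
    and completion_image: "\<And>x. x \<in> S \<Longrightarrow> e x \<in> T"
    and completion_isometry: "\<And>x y. x \<in> S \<Longrightarrow> y \<in> S \<Longrightarrow> d' (e x) (e y) = d x y"
    and completion_dense: "\<And>z \<epsilon>. z \<in> T \<Longrightarrow> 0 < \<epsilon> \<Longrightarrow> \<exists>x\<in>S. d' z (e x) < \<epsilon>"
  using assms unfolding is_completion_def by auto

lemma completion_dense_sequence:
  assumes "is_completion S d T d' e" "z \<in> T"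
  obtains s where "\<And>n. s n \<in> S" "limitin (Metric_space.mtopology T d') (\<lambda>n. e (s n)) z sequentially"
proof -
  have "\<forall>n. \<exists>x\<in>S. d' z (e x) < 1 / real (Suc n)"
    using completion_dense[OF assms] by simp
  then obtain s where s: "\<And>n. s n \<in> S" "\<And>n. d' z (e (s n)) < 1 / real (Suc n)"
    by metis
  interpret T: Metric_space T d'
    by (rule completion_metric[OF assms(1)])
  have "(\<lambda>n. d' (e (s n)) z) \<longlonglongrightarrow> 0"
    by (rule real_tendsto_sandwich[OF _ _ tendsto_const LIMSEQ_inverse_real_of_nat])
      (use s T.commute T.nonneg completion_image[OF assms(1)] assms(2)
        in \<open>auto intro!: always_eventually less_imp_le simp: inverse_eq_divide\<close>)
  then show ?thesis
    by (intro that[OF s(1)])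
      (simp add: T.limitin_metric_dist_null assms(2) completion_image[OF assms(1) s(1)])
qed

lemma abs_diff_unitA:
  assumes "X \<in> unitA" "Y \<in> unitA"
  shows "(\<lambda>w. \<bar>X w - Y w\<bar>) \<in> unitA"
proof -
  have "\<bar>X w - Y w\<bar> \<in> {0..1}" for w
    using assms unfolding unitA_def by (auto simp: abs_le_iff dest!: spec[of _ w])
  then show ?thesis
    unfolding unitA_def by simp
qed

lemma const_unitA: "0 \<le> c \<Longrightarrow> c \<le> 1 \<Longrightarrow> (\<lambda>w. c) \<in> unitA"
  unfolding unitA_def by simp

lemma prodM_choice:
  assumes "\<And>w. \<exists>m\<in>carrier (Ms w). P w m"
  shows "\<exists>b\<in>prodM Ms. \<forall>w. P w (b w)"
proof -
  have "\<forall>w. \<exists>m. m \<in> carrier (Ms w) \<and> P w m"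
    using assms by blast
  then obtain b where "\<forall>w. b w \<in> carrier (Ms w) \<and> P w (b w)"
    by (rule choice[THEN exE])
  then show ?thesis
    unfolding prodM_def by blast
qed

lemma full_prodM:
  fixes Ms :: "'w \<Rightarrow> ('m, 'f, 'p) lstruc"
  shows "full (prodM Ms) unitA"
  unfolding full_def
proof (intro ballI)
  fix a b :: "'w \<Rightarrow> 'm" and X :: "'w \<Rightarrow> real"
  assume "a \<in> prodM Ms" "b \<in> prodM Ms"
  then show "\<exists>c\<in>prodM Ms. \<forall>w. (X w = 1 \<longrightarrow> c w = a w) \<and> (X w = 0 \<longrightarrow> c w = b w)"
    by (intro bexI[of _ "\<lambda>w. if X w = 1 then a w else b w"]) (auto simp: prodM_def)
qed

lemma is_lstrucD:
  assumes "is_lstruc L S"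
  shows lstruc_carrier_nonempty: "carrier S \<noteq> {}"
    and lstruc_metric: "Metric_space (carrier S) (mdist S)"
    and lstruc_mdist_le1: "\<And>x y. x \<in> carrier S \<Longrightarrow> y \<in> carrier S \<Longrightarrow> mdist S x y \<le> 1"
    and lstruc_fint: "\<And>f xs. xs \<in> tuples (carrier S) (farity L f) \<Longrightarrow> fint S f xs \<in> carrier S"
    and lstruc_pint: "\<And>p xs. xs \<in> tuples (carrier S) (parity L p) \<Longrightarrow> pint S p xs \<in> {0..1}"
    and lstruc_fint_modulus: "\<And>f e xs ys. 0 < e \<Longrightarrow> xs \<in> tuples (carrier S) (farity L f) \<Longrightarrow>
          ys \<in> tuples (carrier S) (farity L f) \<Longrightarrow> list_all2 (\<lambda>x y. mdist S x y < fmod L f e) xs ys \<Longrightarrow>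
          mdist S (fint S f xs) (fint S f ys) \<le> e"
    and lstruc_pint_modulus: "\<And>p e xs ys. 0 < e \<Longrightarrow> xs \<in> tuples (carrier S) (parity L p) \<Longrightarrow>
          ys \<in> tuples (carrier S) (parity L p) \<Longrightarrow> list_all2 (\<lambda>x y. mdist S x y < pmod L p e) xs ys \<Longrightarrow>
          \<bar>pint S p xs - pint S p ys\<bar> \<le> e"
  using assms unfolding is_lstruc_def by meson+

lemma lstruc_mdist_unit:
  assumes "is_lstruc L S" "x \<in> carrier S" "y \<in> carrier S"
  shows "mdist S x y \<in> {0..1}"
  using Metric_space.nonneg[OF lstruc_metric[OF assms(1)]] lstruc_mdist_le1[OF assms] by simp

lemma tval_carrier:
  assumes "is_lstruc L S" "\<And>i. \<sigma> i \<in> carrier S" "wf_trm L t"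
  shows "tval S \<sigma> t \<in> carrier S"
  using assms(3)
proof (induction t)
  case (Fn f ts)
  then show ?case
    using lstruc_fint[OF assms(1), of "map (tval S \<sigma>) ts" f] by (auto simp: tuples_def)
qed (use assms(2) in simp)

lemma fval_unit:
  assumes "is_lstruc L S" "wf_fml L \<phi>" "\<And>i. \<sigma> i \<in> carrier S"
  shows "fval S \<sigma> \<phi> \<in> {0..1}"
  using assms(2,3)
proof (induction \<phi> arbitrary: \<sigma>)
  case (Pred p ts)
  then have "map (tval S \<sigma>) ts \<in> tuples (carrier S) (parity L p)"
    using tval_carrier[OF assms(1)] by (auto simp: tuples_def)
  then show ?case
    using lstruc_pint[OF assms(1)] by simp
next
  case (Dist t u)
  then show ?case
    using lstruc_mdist_unit[OF assms(1)] tval_carrier[OF assms(1)] by simp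
next
  case (Sup x \<phi>)
  then have "\<And>b. b \<in> carrier S \<Longrightarrow> fval S (\<sigma>(x := b)) \<phi> \<in> {0..1}"
    by simp
  then show ?case
    using SUP_unit_interval[OF lstruc_carrier_nonempty[OF assms(1)]] by simp
next
  case (Inf x \<phi>)
  then have "\<And>b. b \<in> carrier S \<Longrightarrow> fval S (\<sigma>(x := b)) \<phi> \<in> {0..1}"
    by simp
  then show ?case
    using INF_unit_interval[OF lstruc_carrier_nonempty[OF assms(1)]] by simp
next
  case (Neg \<phi>)
  then have "fval S \<sigma> \<phi> \<in> {0..1}"
    by simp
  then show ?case
    by simp
next
  case (Half \<phi>)
  then have "fval S \<sigma> \<phi> \<in> {0..1}"
    by simp
  then show ?case
    by simp
next
  case (Minus \<phi> \<psi>)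
  then have "fval S \<sigma> \<phi> \<in> {0..1}" "fval S \<sigma> \<psi> \<in> {0..1}"
    by simp_all
  then show ?case
    by simp
qed simp

definition rv_trm :: "('w \<Rightarrow> ('m, 'f, 'p) lstruc) \<Rightarrow> (nat \<Rightarrow> ('w \<Rightarrow> 'm)) \<Rightarrow> 'f trm \<Rightarrow> ('w \<Rightarrow> 'm)" where
  "rv_trm Ms as t = (\<lambda>w. tval (Ms w) (\<lambda>i. as i w) t)"

lemma rv_trm_Var [simp]: "rv_trm Ms as (Var i) = as i"
  by (simp add: rv_trm_def)

lemma rv_trm_Fn: "rv_trm Ms as (Fn f ts) = pw_fun Ms f (map (rv_trm Ms as) ts)"
  by (simp add: rv_trm_def pw_fun_def o_def)

lemma rv_trm_Fn_apply: "rv_trm Ms as (Fn f ts) w = fint (Ms w) f (map (\<lambda>t. rv_trm Ms as t w) ts)"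
  by (simp add: rv_trm_def o_def)

lemma rv_fml_Pred: "rv_fml Ms as (Pred p ts) = pw_pred Ms p (map (rv_trm Ms as) ts)"
  by (simp add: rv_trm_def rv_fml_def pw_pred_def o_def)

lemma rv_fml_Pred_apply: "rv_fml Ms as (Pred p ts) w = pint (Ms w) p (map (\<lambda>t. rv_trm Ms as t w) ts)"
  by (simp add: rv_fml_Pred pw_pred_def o_def)

lemma rv_fml_Dist: "rv_fml Ms as (Dist t u) = pw_dist Ms (rv_trm Ms as t) (rv_trm Ms as u)"
  by (simp add: rv_trm_def rv_fml_def pw_dist_def)

lemma rv_fml_upd_apply:
  "rv_fml Ms (as(x := b)) \<phi> w = fval (Ms w) ((\<lambda>i. as i w)(x := b w)) \<phi>"
  unfolding rv_fml_def by (rule arg_cong[where f = "\<lambda>\<sigma>. fval (Ms w) \<sigma> \<phi>"]) auto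

section \<open>Uniform continuity in the pre-structure\<close>

locale randomization = integration E
  for E :: "('w \<Rightarrow> real) \<Rightarrow> real" +
  fixes L :: "('f, 'p) csig" and Ms :: "'w \<Rightarrow> ('m, 'f, 'p) lstruc"
  assumes wf_csig: "wf_csig L" and lstruc: "is_lstruc L (Ms w)"
begin

lemma rv_trm_prodM:
  assumes "wf_trm L t" "\<forall>i. as i \<in> prodM Ms"
  shows "rv_trm Ms as t \<in> prodM Ms"
  using tval_carrier[OF lstruc _ assms(1)] assms(2) unfolding prodM_def rv_trm_def by simp

lemma rv_fml_unitA:
  assumes "wf_fml L \<phi>" "\<forall>i. as i \<in> prodM Ms"
  shows "rv_fml Ms as \<phi> \<in> unitA"
  using fval_unit[OF lstruc assms(1)] assms(2) unfolding unitA_def rv_fml_def prodM_def by simp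

lemma pw_dist_unitA: "a \<in> prodM Ms \<Longrightarrow> b \<in> prodM Ms \<Longrightarrow> pw_dist Ms a b \<in> unitA"
  unfolding unitA_def pw_dist_def prodM_def using lstruc_mdist_unit[OF lstruc] by simp

lemma dM_self: "a \<in> prodM Ms \<Longrightarrow> dM E Ms a a = 0"
  using Metric_space.mdist_zero[OF lstruc_metric[OF lstruc]] E_zero
  by (simp add: dM_def pw_dist_def prodM_def)

lemma rv_trm_carrier: "wf_trm L t \<Longrightarrow> \<forall>i. as i \<in> prodM Ms \<Longrightarrow> rv_trm Ms as t w \<in> carrier (Ms w)"
  using rv_trm_prodM unfolding prodM_def by blast

lemma rv_trm_tuples:
  assumes "\<forall>t\<in>set ts. wf_trm L t" "length ts = n" "\<forall>i. as i \<in> prodM Ms"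
  shows "map (\<lambda>t. rv_trm Ms as t w) ts \<in> tuples (carrier (Ms w)) n"
  using rv_trm_carrier assms unfolding tuples_def by auto

definition uniformly_small :: "((nat \<Rightarrow> 'w \<Rightarrow> 'm) \<Rightarrow> (nat \<Rightarrow> 'w \<Rightarrow> 'm) \<Rightarrow> 'w \<Rightarrow> real) \<Rightarrow> bool" where
  "uniformly_small D \<longleftrightarrow> (\<forall>\<epsilon>>0. \<exists>\<delta>>0. \<forall>A B. (\<forall>i. A i \<in> prodM Ms) \<longrightarrow> (\<forall>i. B i \<in> prodM Ms) \<longrightarrow>
     (\<forall>i. dM E Ms (A i) (B i) < \<delta>) \<longrightarrow> E (D A B) < \<epsilon>)"

lemma uniformly_smallD:
  assumes "uniformly_small D" "0 < \<epsilon>"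
  obtains \<delta> where "0 < \<delta>" "\<And>A B. \<forall>i. A i \<in> prodM Ms \<Longrightarrow> \<forall>i. B i \<in> prodM Ms \<Longrightarrow>
     \<forall>i. dM E Ms (A i) (B i) < \<delta> \<Longrightarrow> E (D A B) < \<epsilon>"
  using assms unfolding uniformly_small_def by blast

lemma uniformly_small_sum_list:
  assumes "\<forall>D\<in>set Ds. uniformly_small D" "0 < \<epsilon>"
  shows "\<exists>\<delta>>0. \<forall>A B. (\<forall>i. A i \<in> prodM Ms) \<longrightarrow> (\<forall>i. B i \<in> prodM Ms) \<longrightarrow>
     (\<forall>i. dM E Ms (A i) (B i) < \<delta>) \<longrightarrow> (\<Sum>D\<leftarrow>Ds. E (D A B)) < \<epsilon>"
  using assms
proof (induction Ds arbitrary: \<epsilon>)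
  case Nil
  then show ?case
    by (intro exI[of _ 1]) simp
next
  case (Cons D Ds)
  have "\<forall>D\<in>set Ds. uniformly_small D" "uniformly_small D"
    using Cons.prems(1) by simp_all
  obtain \<delta>1 where "0 < \<delta>1" and \<delta>1: "\<forall>A B. (\<forall>i. A i \<in> prodM Ms) \<longrightarrow> (\<forall>i. B i \<in> prodM Ms) \<longrightarrow>
     (\<forall>i. dM E Ms (A i) (B i) < \<delta>1) \<longrightarrow> (\<Sum>D\<leftarrow>Ds. E (D A B)) < \<epsilon> / 2"
    using Cons.IH[OF \<open>\<forall>D\<in>set Ds. uniformly_small D\<close> half_gt_zero[OF Cons.prems(2)]] by blast
  obtain \<delta>2 where "0 < \<delta>2" and \<delta>2: "\<And>A B. \<forall>i. A i \<in> prodM Ms \<Longrightarrow> \<forall>i. B i \<in> prodM Ms \<Longrightarrow>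
     \<forall>i. dM E Ms (A i) (B i) < \<delta>2 \<Longrightarrow> E (D A B) < \<epsilon> / 2"
    using uniformly_smallD[OF \<open>uniformly_small D\<close> half_gt_zero[OF Cons.prems(2)]] by blast
  show ?case
  proof (intro exI[of _ "min \<delta>1 \<delta>2"] conjI allI impI)
    fix A B :: "nat \<Rightarrow> 'w \<Rightarrow> 'm"
    assume "\<forall>i. A i \<in> prodM Ms" "\<forall>i. B i \<in> prodM Ms" "\<forall>i. dM E Ms (A i) (B i) < min \<delta>1 \<delta>2"
    then have "E (D A B) < \<epsilon> / 2" "(\<Sum>D\<leftarrow>Ds. E (D A B)) < \<epsilon> / 2"
      using \<delta>1 \<delta>2 by simp_all
    then show "(\<Sum>D\<leftarrow>D # Ds. E (D A B)) < \<epsilon>"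
      by simp
  qed (use \<open>0 < \<delta>1\<close> \<open>0 < \<delta>2\<close> in simp)
qed

text \<open>Markov's inequality turns a pointwise modulus of continuity into a uniform bound on E.\<close>

lemma uniformly_small_by_modulus:
  assumes small: "\<forall>D'\<in>set Ds. uniformly_small D'"
    and unit: "\<And>A B. \<forall>i. A i \<in> prodM Ms \<Longrightarrow> \<forall>i. B i \<in> prodM Ms \<Longrightarrow>
      D A B \<in> unitA \<and> (\<forall>D'\<in>set Ds. D' A B \<in> unitA)"
    and modulus: "\<And>c. 0 < c \<Longrightarrow> \<exists>\<eta>>0. \<forall>A B w. (\<forall>i. A i \<in> prodM Ms) \<longrightarrow> (\<forall>i. B i \<in> prodM Ms) \<longrightarrow>
      (\<forall>D'\<in>set Ds. D' A B w < \<eta>) \<longrightarrow> D A B w \<le> c"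
  shows "uniformly_small D"
  unfolding uniformly_small_def
proof (intro allI impI)
  fix \<epsilon> :: real
  assume "0 < \<epsilon>"
  then obtain k where k: "1 / real (Suc k) < \<epsilon> / 2"
    by (metis half_gt_zero nat_approx_posE)
  define c where "c = 1 / real (Suc k)"
  obtain \<eta> where \<eta>: "0 < \<eta>" "\<forall>A B w. (\<forall>i. A i \<in> prodM Ms) \<longrightarrow> (\<forall>i. B i \<in> prodM Ms) \<longrightarrow>
      (\<forall>D'\<in>set Ds. D' A B w < \<eta>) \<longrightarrow> D A B w \<le> c"
    using modulus[of c] by (auto simp: c_def)
  obtain N :: nat where "1 / \<eta> \<le> real N"
    using real_arch_simple by blast
  then have N: "1 \<le> real N * \<eta>"
    using \<eta>(1) by (simp add: field_simps)
  then have "0 < real N"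
    by (auto intro!: gr0I)
  then obtain \<delta> where \<delta>: "0 < \<delta>" "\<forall>A B. (\<forall>i. A i \<in> prodM Ms) \<longrightarrow> (\<forall>i. B i \<in> prodM Ms) \<longrightarrow>
     (\<forall>i. dM E Ms (A i) (B i) < \<delta>) \<longrightarrow> (\<Sum>D'\<leftarrow>Ds. E (D' A B)) < \<epsilon> / (2 * real N)"
    using uniformly_small_sum_list[OF small, of "\<epsilon> / (2 * real N)"] \<open>0 < \<epsilon>\<close> by auto
  show "\<exists>\<delta>>0. \<forall>A B. (\<forall>i. A i \<in> prodM Ms) \<longrightarrow> (\<forall>i. B i \<in> prodM Ms) \<longrightarrow>
     (\<forall>i. dM E Ms (A i) (B i) < \<delta>) \<longrightarrow> E (D A B) < \<epsilon>"
  proof (intro exI[of _ \<delta>] conjI allI impI)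
    fix A B :: "nat \<Rightarrow> 'w \<Rightarrow> 'm"
    assume A: "\<forall>i. A i \<in> prodM Ms" and B: "\<forall>i. B i \<in> prodM Ms"
      and close: "\<forall>i. dM E Ms (A i) (B i) < \<delta>"
    have "E (D A B) \<le> E (\<lambda>w. c) + real N * (\<Sum>D'\<leftarrow>map (\<lambda>D'. D' A B) Ds. E D')"
      by (rule E_le_by_modulus[OF _ _ _ _ N]) (use unit[OF A B] \<eta>(2) A B in \<open>auto simp: c_def\<close>)
    also have "\<dots> = c + real N * (\<Sum>D'\<leftarrow>Ds. E (D' A B))"
      by (simp add: c_def E_const_inverse o_def del: of_nat_Suc)
    also have "\<dots> < \<epsilon> / 2 + real N * (\<epsilon> / (2 * real N))"
      using k \<delta>(2) A B close \<open>0 < real N\<close> unfolding c_def by (intro add_strict_mono mult_strict_left_mono) auto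
    also have "\<dots> = \<epsilon>"
      using \<open>0 < real N\<close> by simp
    finally show "E (D A B) < \<epsilon>" .
  qed (rule \<delta>(1))
qed

definition rv_trm_dist :: "'f trm \<Rightarrow> (nat \<Rightarrow> 'w \<Rightarrow> 'm) \<Rightarrow> (nat \<Rightarrow> 'w \<Rightarrow> 'm) \<Rightarrow> 'w \<Rightarrow> real" where
  "rv_trm_dist t A B = pw_dist Ms (rv_trm Ms A t) (rv_trm Ms B t)"

lemma rv_trm_dist_unitA:
  "wf_trm L t \<Longrightarrow> \<forall>i. A i \<in> prodM Ms \<Longrightarrow> \<forall>i. B i \<in> prodM Ms \<Longrightarrow> rv_trm_dist t A B \<in> unitA"
  unfolding rv_trm_dist_def by (intro pw_dist_unitA rv_trm_prodM)

lemma rv_trm_dist_args: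
  "\<forall>D\<in>set (map rv_trm_dist ts). D A B w < \<eta> \<Longrightarrow>
     list_all2 (\<lambda>x y. mdist (Ms w) x y < \<eta>) (map (\<lambda>t. rv_trm Ms A t w) ts) (map (\<lambda>t. rv_trm Ms B t w) ts)"
  by (simp add: list_all2_map1 list_all2_map2 list_all2_same rv_trm_dist_def pw_dist_def)

lemma uniformly_small_rv_trm: "wf_trm L t \<Longrightarrow> uniformly_small (rv_trm_dist t)"
proof (induction t)
  case (Var i)
  then show ?case
    unfolding uniformly_small_def rv_trm_dist_def dM_def by auto
next
  case (Fn f ts)
  have wf: "length ts = farity L f" "\<forall>t\<in>set ts. wf_trm L t"
    using Fn.prems by auto
  show ?case
  proof (rule uniformly_small_by_modulus[where Ds = "map rv_trm_dist ts"])
    show "\<forall>D'\<in>set (map rv_trm_dist ts). uniformly_small D'"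
      using Fn.IH wf(2) by auto
    show "rv_trm_dist (Fn f ts) A B \<in> unitA \<and> (\<forall>D'\<in>set (map rv_trm_dist ts). D' A B \<in> unitA)"
      if "\<forall>i. A i \<in> prodM Ms" "\<forall>i. B i \<in> prodM Ms" for A B
      using rv_trm_dist_unitA[OF _ that] Fn.prems wf(2) by simp
    fix c :: real
    assume "0 < c"
    show "\<exists>\<eta>>0. \<forall>A B w. (\<forall>i. A i \<in> prodM Ms) \<longrightarrow> (\<forall>i. B i \<in> prodM Ms) \<longrightarrow>
      (\<forall>D'\<in>set (map rv_trm_dist ts). D' A B w < \<eta>) \<longrightarrow> rv_trm_dist (Fn f ts) A B w \<le> c"
    proof (intro exI[of _ "fmod L f c"] conjI allI impI)
      show "0 < fmod L f c"
        using wf_csig \<open>0 < c\<close> unfolding wf_csig_def by blast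
      fix A B :: "nat \<Rightarrow> 'w \<Rightarrow> 'm" and w
      assume A: "\<forall>i. A i \<in> prodM Ms" and B: "\<forall>i. B i \<in> prodM Ms"
        and near: "\<forall>D'\<in>set (map rv_trm_dist ts). D' A B w < fmod L f c"
      have "list_all2 (\<lambda>x y. mdist (Ms w) x y < fmod L f c)
          (map (\<lambda>t. rv_trm Ms A t w) ts) (map (\<lambda>t. rv_trm Ms B t w) ts)"
        by (rule rv_trm_dist_args[OF near])
      then show "rv_trm_dist (Fn f ts) A B w \<le> c"
        unfolding rv_trm_dist_def pw_dist_def rv_trm_Fn_apply
        using lstruc_fint_modulus[OF lstruc \<open>0 < c\<close> rv_trm_tuples[OF wf(2,1) A] rv_trm_tuples[OF wf(2,1) B]]
        by blast
    qed
  qed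
qed

definition rv_fml_dist :: "('f, 'p) fml \<Rightarrow> (nat \<Rightarrow> 'w \<Rightarrow> 'm) \<Rightarrow> (nat \<Rightarrow> 'w \<Rightarrow> 'm) \<Rightarrow> 'w \<Rightarrow> real" where
  "rv_fml_dist \<phi> A B = (\<lambda>w. \<bar>rv_fml Ms A \<phi> w - rv_fml Ms B \<phi> w\<bar>)"

lemma rv_fml_dist_unitA:
  "wf_fml L \<phi> \<Longrightarrow> \<forall>i. A i \<in> prodM Ms \<Longrightarrow> \<forall>i. B i \<in> prodM Ms \<Longrightarrow> rv_fml_dist \<phi> A B \<in> unitA"
  unfolding rv_fml_dist_def by (intro abs_diff_unitA rv_fml_unitA)

lemma uniformly_small_connective:
  assumes "wf_fml L \<phi>" "\<forall>\<psi>\<in>set \<psi>s. wf_fml L \<psi> \<and> uniformly_small (rv_fml_dist \<psi>)"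
    and modulus: "\<And>c. 0 < c \<Longrightarrow> \<exists>\<eta>>0. \<forall>A B w.
      (\<forall>\<psi>\<in>set \<psi>s. rv_fml_dist \<psi> A B w < \<eta>) \<longrightarrow> rv_fml_dist \<phi> A B w \<le> c"
  shows "uniformly_small (rv_fml_dist \<phi>)"
proof (rule uniformly_small_by_modulus[where Ds = "map rv_fml_dist \<psi>s"])
  fix c :: real
  assume "0 < c"
  then show "\<exists>\<eta>>0. \<forall>A B w. (\<forall>i. A i \<in> prodM Ms) \<longrightarrow> (\<forall>i. B i \<in> prodM Ms) \<longrightarrow>
      (\<forall>D'\<in>set (map rv_fml_dist \<psi>s). D' A B w < \<eta>) \<longrightarrow> rv_fml_dist \<phi> A B w \<le> c"
    using modulus[OF \<open>0 < c\<close>] by (simp; blast)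
qed (use assms(1,2) rv_fml_dist_unitA in auto)

lemma fval_upd_unit:
  "wf_fml L \<phi> \<Longrightarrow> \<forall>i. A i \<in> prodM Ms \<Longrightarrow> m \<in> carrier (Ms w) \<Longrightarrow>
     fval (Ms w) ((\<lambda>i. A i w)(x := m)) \<phi> \<in> {0..1}"
  using fval_unit[OF lstruc] by (simp add: prodM_def)

lemma rv_fml_Sup_upper:
  assumes "wf_fml L \<phi>" "\<forall>i. A i \<in> prodM Ms" "b \<in> prodM Ms"
  shows "rv_fml Ms (A(x := b)) \<phi> w \<le> rv_fml Ms A (Sup x \<phi>) w"
proof -
  have "bdd_above ((\<lambda>m. fval (Ms w) ((\<lambda>i. A i w)(x := m)) \<phi>) ` carrier (Ms w))"
    using fval_upd_unit[OF assms(1,2)] by (intro bdd_aboveI[of _ 1]) auto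
  moreover have "b w \<in> carrier (Ms w)"
    using assms(3) by (simp add: prodM_def)
  ultimately show ?thesis
    unfolding rv_fml_upd_apply using cSUP_upper by (simp add: rv_fml_def)
qed

lemma rv_fml_Inf_lower:
  assumes "wf_fml L \<phi>" "\<forall>i. A i \<in> prodM Ms" "b \<in> prodM Ms"
  shows "rv_fml Ms A (Inf x \<phi>) w \<le> rv_fml Ms (A(x := b)) \<phi> w"
proof -
  have "bdd_below ((\<lambda>m. fval (Ms w) ((\<lambda>i. A i w)(x := m)) \<phi>) ` carrier (Ms w))"
    using fval_upd_unit[OF assms(1,2)] by (intro bdd_belowI[of _ 0]) auto
  moreover have "b w \<in> carrier (Ms w)"
    using assms(3) by (simp add: prodM_def)
  ultimately show ?thesis
    unfolding rv_fml_upd_apply using cINF_lower by (simp add: rv_fml_def)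
qed

lemma rv_fml_Sup_witness:
  assumes "wf_fml L \<phi>" "\<forall>i. A i \<in> prodM Ms" "0 < c"
  shows "\<exists>b\<in>prodM Ms. \<forall>w. rv_fml Ms A (Sup x \<phi>) w \<le> rv_fml Ms (A(x := b)) \<phi> w + c"
  unfolding rv_fml_upd_apply
proof (rule prodM_choice)
  fix w
  let ?f = "\<lambda>m. fval (Ms w) ((\<lambda>i. A i w)(x := m)) \<phi>"
  have "bdd_above (?f ` carrier (Ms w))"
    using fval_upd_unit[OF assms(1,2)] by (intro bdd_aboveI[of _ 1]) auto
  moreover have "(SUP m\<in>carrier (Ms w). ?f m) - c < (SUP m\<in>carrier (Ms w). ?f m)"
    using assms(3) by simp
  ultimately obtain m where "m \<in> carrier (Ms w)" "(SUP m\<in>carrier (Ms w). ?f m) - c < ?f m"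
    using less_cSUP_iff[OF lstruc_carrier_nonempty[OF lstruc]] by blast
  then show "\<exists>m\<in>carrier (Ms w). rv_fml Ms A (Sup x \<phi>) w \<le> ?f m + c"
    by (intro bexI[of _ m]) (auto simp: rv_fml_def)
qed

lemma rv_fml_Inf_witness:
  assumes "wf_fml L \<phi>" "\<forall>i. A i \<in> prodM Ms" "0 < c"
  shows "\<exists>b\<in>prodM Ms. \<forall>w. rv_fml Ms (A(x := b)) \<phi> w \<le> rv_fml Ms A (Inf x \<phi>) w + c"
  unfolding rv_fml_upd_apply
proof (rule prodM_choice)
  fix w
  let ?f = "\<lambda>m. fval (Ms w) ((\<lambda>i. A i w)(x := m)) \<phi>"
  have "bdd_below (?f ` carrier (Ms w))"
    using fval_upd_unit[OF assms(1,2)] by (intro bdd_belowI[of _ 0]) auto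
  moreover have "(INF m\<in>carrier (Ms w). ?f m) < (INF m\<in>carrier (Ms w). ?f m) + c"
    using assms(3) by simp
  ultimately obtain m where "m \<in> carrier (Ms w)" "?f m < (INF m\<in>carrier (Ms w). ?f m) + c"
    using cINF_less_iff[OF lstruc_carrier_nonempty[OF lstruc]] by blast
  then show "\<exists>m\<in>carrier (Ms w). ?f m \<le> rv_fml Ms A (Inf x \<phi>) w + c"
    by (intro bexI[of _ m]) (auto simp: rv_fml_def)
qed

lemma rv_quantifier_witness:
  assumes "wf_fml L \<phi>" "\<forall>i. A i \<in> prodM Ms" "\<forall>i. B i \<in> prodM Ms" "0 < c"
    and Q: "Q = Sup x \<phi> \<or> Q = Inf x \<phi>"
  shows "\<exists>b\<in>prodM Ms. \<forall>w. rv_fml_dist Q A B w \<le> rv_fml_dist \<phi> (A(x := b)) (B(x := b)) w + c"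
proof -
  have "\<exists>m\<in>carrier (Ms w). rv_fml_dist Q A B w \<le>
      \<bar>fval (Ms w) ((\<lambda>i. A i w)(x := m)) \<phi> - fval (Ms w) ((\<lambda>i. B i w)(x := m)) \<phi>\<bar> + c" for w
  proof -
    have unit: "fval (Ms w) ((\<lambda>i. A i w)(x := m)) \<phi> \<in> {0..1}" "fval (Ms w) ((\<lambda>i. B i w)(x := m)) \<phi> \<in> {0..1}"
      if "m \<in> carrier (Ms w)" for m
      using fval_unit[OF lstruc assms(1)] assms(2,3) that by (auto simp: prodM_def)
    then have "bdd_above ((\<lambda>m. fval (Ms w) ((\<lambda>i. A i w)(x := m)) \<phi>) ` carrier (Ms w))"
      "bdd_above ((\<lambda>m. fval (Ms w) ((\<lambda>i. B i w)(x := m)) \<phi>) ` carrier (Ms w))"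
      "bdd_below ((\<lambda>m. fval (Ms w) ((\<lambda>i. A i w)(x := m)) \<phi>) ` carrier (Ms w))"
      "bdd_below ((\<lambda>m. fval (Ms w) ((\<lambda>i. B i w)(x := m)) \<phi>) ` carrier (Ms w))"
      by (auto intro: bdd_aboveI[of _ 1] bdd_belowI[of _ 0])
    with Q show ?thesis
      using abs_SUP_diff_witness[OF lstruc_carrier_nonempty[OF lstruc] _ _ assms(4)]
        abs_INF_diff_witness[OF lstruc_carrier_nonempty[OF lstruc] _ _ assms(4)]
      by (auto simp: rv_fml_dist_def rv_fml_def)
  qed
  then show ?thesis
    unfolding rv_fml_dist_def rv_fml_upd_apply by (rule prodM_choice)
qed

lemma uniformly_small_quantifier:
  assumes "wf_fml L \<phi>" "uniformly_small (rv_fml_dist \<phi>)" "Q = Sup x \<phi> \<or> Q = Inf x \<phi>"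
  shows "uniformly_small (rv_fml_dist Q)"
  unfolding uniformly_small_def
proof (intro allI impI)
  fix \<epsilon> :: real
  assume "0 < \<epsilon>"
  then obtain k where k: "1 / real (Suc k) < \<epsilon> / 2"
    by (metis half_gt_zero nat_approx_posE)
  define c where "c = 1 / real (Suc k)"
  obtain \<delta> where \<delta>: "0 < \<delta>" "\<And>A B. \<forall>i. A i \<in> prodM Ms \<Longrightarrow> \<forall>i. B i \<in> prodM Ms \<Longrightarrow>
     \<forall>i. dM E Ms (A i) (B i) < \<delta> \<Longrightarrow> E (rv_fml_dist \<phi> A B) < \<epsilon> / 2"
    using uniformly_smallD[OF assms(2) half_gt_zero[OF \<open>0 < \<epsilon>\<close>]] by blast
  show "\<exists>\<delta>>0. \<forall>A B. (\<forall>i. A i \<in> prodM Ms) \<longrightarrow> (\<forall>i. B i \<in> prodM Ms) \<longrightarrow>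
     (\<forall>i. dM E Ms (A i) (B i) < \<delta>) \<longrightarrow> E (rv_fml_dist Q A B) < \<epsilon>"
  proof (intro exI[of _ \<delta>] conjI allI impI)
    fix A B :: "nat \<Rightarrow> 'w \<Rightarrow> 'm"
    assume A: "\<forall>i. A i \<in> prodM Ms" and B: "\<forall>i. B i \<in> prodM Ms"
      and close: "\<forall>i. dM E Ms (A i) (B i) < \<delta>"
    obtain b where b: "b \<in> prodM Ms" "\<And>w. rv_fml_dist Q A B w \<le> rv_fml_dist \<phi> (A(x := b)) (B(x := b)) w + c"
      using rv_quantifier_witness[OF assms(1) A B _ assms(3), of c] by (auto simp: c_def)
    have A': "\<forall>i. (A(x := b)) i \<in> prodM Ms" and B': "\<forall>i. (B(x := b)) i \<in> prodM Ms"
      using A B b(1) by auto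
    have "\<forall>i. dM E Ms ((A(x := b)) i) ((B(x := b)) i) < \<delta>"
      using close dM_self[OF b(1)] \<delta>(1) by auto
    then have "E (rv_fml_dist \<phi> (A(x := b)) (B(x := b))) < \<epsilon> / 2"
      by (rule \<delta>(2)[OF A' B'])
    moreover have "E (rv_fml_dist Q A B) \<le> E (rv_fml_dist \<phi> (A(x := b)) (B(x := b))) + E (\<lambda>w. c)"
    proof (rule E_subadditive[OF rv_fml_dist_unitA[OF assms(1) A' B'] _ rv_fml_dist_unitA[OF _ A B] b(2)])
      show "wf_fml L Q"
        using assms(1,3) by auto
    qed (simp add: c_def unitA_def)
    moreover have "E (\<lambda>w. c) = c"
      unfolding c_def by (rule E_const_inverse)
    ultimately show "E (rv_fml_dist Q A B) < \<epsilon>"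
      using k by (simp add: c_def)
  qed (rule \<delta>(1))
qed

lemma uniformly_small_Pred:
  assumes "wf_fml L (Pred p ts)"
  shows "uniformly_small (rv_fml_dist (Pred p ts))"
proof -
  have wf: "length ts = parity L p" "\<forall>t\<in>set ts. wf_trm L t"
    using assms by auto
  show ?thesis
  proof (rule uniformly_small_by_modulus[where Ds = "map rv_trm_dist ts"])
    show "\<forall>D'\<in>set (map rv_trm_dist ts). uniformly_small D'"
      using uniformly_small_rv_trm wf(2) by auto
    show "rv_fml_dist (Pred p ts) A B \<in> unitA \<and> (\<forall>D'\<in>set (map rv_trm_dist ts). D' A B \<in> unitA)"
      if "\<forall>i. A i \<in> prodM Ms" "\<forall>i. B i \<in> prodM Ms" for A B
      using rv_fml_dist_unitA[OF assms that] rv_trm_dist_unitA[OF _ that] wf(2) by simp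
    fix c :: real
    assume "0 < c"
    show "\<exists>\<eta>>0. \<forall>A B w. (\<forall>i. A i \<in> prodM Ms) \<longrightarrow> (\<forall>i. B i \<in> prodM Ms) \<longrightarrow>
      (\<forall>D'\<in>set (map rv_trm_dist ts). D' A B w < \<eta>) \<longrightarrow> rv_fml_dist (Pred p ts) A B w \<le> c"
    proof (intro exI[of _ "pmod L p c"] conjI allI impI)
      show "0 < pmod L p c"
        using wf_csig \<open>0 < c\<close> unfolding wf_csig_def by blast
      fix A B :: "nat \<Rightarrow> 'w \<Rightarrow> 'm" and w
      assume A: "\<forall>i. A i \<in> prodM Ms" and B: "\<forall>i. B i \<in> prodM Ms"
        and near: "\<forall>D'\<in>set (map rv_trm_dist ts). D' A B w < pmod L p c"
      have "list_all2 (\<lambda>x y. mdist (Ms w) x y < pmod L p c)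
          (map (\<lambda>t. rv_trm Ms A t w) ts) (map (\<lambda>t. rv_trm Ms B t w) ts)"
        by (rule rv_trm_dist_args[OF near])
      then show "rv_fml_dist (Pred p ts) A B w \<le> c"
        unfolding rv_fml_dist_def rv_fml_Pred_apply
        using lstruc_pint_modulus[OF lstruc \<open>0 < c\<close> rv_trm_tuples[OF wf(2,1) A] rv_trm_tuples[OF wf(2,1) B]]
        by blast
    qed
  qed
qed

lemma uniformly_small_Dist:
  assumes "wf_fml L (Dist t u)"
  shows "uniformly_small (rv_fml_dist (Dist t u))"
proof -
  have wf: "wf_trm L t" "wf_trm L u"
    using assms by auto
  show ?thesis
  proof (rule uniformly_small_by_modulus[where Ds = "[rv_trm_dist t, rv_trm_dist u]"])
    show "\<forall>D'\<in>set [rv_trm_dist t, rv_trm_dist u]. uniformly_small D'"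
      using uniformly_small_rv_trm wf by auto
    show "rv_fml_dist (Dist t u) A B \<in> unitA \<and> (\<forall>D'\<in>set [rv_trm_dist t, rv_trm_dist u]. D' A B \<in> unitA)"
      if "\<forall>i. A i \<in> prodM Ms" "\<forall>i. B i \<in> prodM Ms" for A B
      using rv_fml_dist_unitA[OF assms that] rv_trm_dist_unitA[OF _ that] wf by simp
    fix c :: real
    assume "0 < c"
    show "\<exists>\<eta>>0. \<forall>A B w. (\<forall>i. A i \<in> prodM Ms) \<longrightarrow> (\<forall>i. B i \<in> prodM Ms) \<longrightarrow>
      (\<forall>D'\<in>set [rv_trm_dist t, rv_trm_dist u]. D' A B w < \<eta>) \<longrightarrow> rv_fml_dist (Dist t u) A B w \<le> c"
    proof (intro exI[of _ "c / 2"] conjI allI impI)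
      fix A B :: "nat \<Rightarrow> 'w \<Rightarrow> 'm" and w
      assume A: "\<forall>i. A i \<in> prodM Ms" and B: "\<forall>i. B i \<in> prodM Ms"
        and near: "\<forall>D'\<in>set [rv_trm_dist t, rv_trm_dist u]. D' A B w < c / 2"
      have "rv_fml_dist (Dist t u) A B w \<le> rv_trm_dist t A B w + rv_trm_dist u A B w"
        unfolding rv_fml_dist_def rv_trm_dist_def rv_fml_Dist pw_dist_def
        by (rule Metric_space.mdist_diff_le[OF lstruc_metric[OF lstruc]]) (use rv_trm_carrier wf A B in auto)
      then show "rv_fml_dist (Dist t u) A B w \<le> c"
        using near by simp
    qed (use \<open>0 < c\<close> in simp)
  qed
qed

lemma uniformly_small_Neg:
  assumes "wf_fml L \<phi>" "uniformly_small (rv_fml_dist \<phi>)"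
  shows "uniformly_small (rv_fml_dist (Neg \<phi>))"
proof (rule uniformly_small_connective[where \<psi>s = "[\<phi>]"])
  fix c :: real
  assume "0 < c"
  show "\<exists>\<eta>>0. \<forall>A B w. (\<forall>\<theta>\<in>set [\<phi>]. rv_fml_dist \<theta> A B w < \<eta>) \<longrightarrow> rv_fml_dist (Neg \<phi>) A B w \<le> c"
    using \<open>0 < c\<close> by (intro exI[of _ c]) (auto simp: rv_fml_dist_def rv_fml_def abs_minus_commute)
qed (use assms in auto)

lemma uniformly_small_Half:
  assumes "wf_fml L \<phi>" "uniformly_small (rv_fml_dist \<phi>)"
  shows "uniformly_small (rv_fml_dist (Half \<phi>))"
proof (rule uniformly_small_connective[where \<psi>s = "[\<phi>]"])
  fix c :: real
  assume "0 < c"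
  show "\<exists>\<eta>>0. \<forall>A B w. (\<forall>\<theta>\<in>set [\<phi>]. rv_fml_dist \<theta> A B w < \<eta>) \<longrightarrow> rv_fml_dist (Half \<phi>) A B w \<le> c"
    using \<open>0 < c\<close> by (intro exI[of _ c]) (auto simp: rv_fml_dist_def rv_fml_def abs_le_iff)
qed (use assms in auto)

lemma uniformly_small_Minus:
  assumes "wf_fml L \<phi>" "wf_fml L \<psi>" "uniformly_small (rv_fml_dist \<phi>)" "uniformly_small (rv_fml_dist \<psi>)"
  shows "uniformly_small (rv_fml_dist (Minus \<phi> \<psi>))"
proof (rule uniformly_small_connective[where \<psi>s = "[\<phi>, \<psi>]"])
  fix c :: real
  assume "0 < c"
  show "\<exists>\<eta>>0. \<forall>A B w. (\<forall>\<theta>\<in>set [\<phi>, \<psi>]. rv_fml_dist \<theta> A B w < \<eta>) \<longrightarrow> rv_fml_dist (Minus \<phi> \<psi>) A B w \<le> c"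
  proof (intro exI[of _ "c / 2"] conjI allI impI)
    fix A B :: "nat \<Rightarrow> 'w \<Rightarrow> 'm" and w
    assume "\<forall>\<theta>\<in>set [\<phi>, \<psi>]. rv_fml_dist \<theta> A B w < c / 2"
    moreover have "rv_fml_dist (Minus \<phi> \<psi>) A B w \<le> rv_fml_dist \<phi> A B w + rv_fml_dist \<psi> A B w"
      unfolding rv_fml_dist_def rv_fml_def fval.simps by (rule abs_max_diff_le)
    ultimately show "rv_fml_dist (Minus \<phi> \<psi>) A B w \<le> c"
      by simp
  qed (use \<open>0 < c\<close> in simp)
qed (use assms in auto)

theorem uniformly_small_rv_fml: "wf_fml L \<phi> \<Longrightarrow> uniformly_small (rv_fml_dist \<phi>)"
proof (induction \<phi>)
  case Zero
  show ?case
    by (rule uniformly_small_connective[where \<psi>s = "[]"]) (auto simp: rv_fml_dist_def rv_fml_def)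
next
  case (Neg \<phi>)
  then show ?case
    by (intro uniformly_small_Neg) simp_all
next
  case (Half \<phi>)
  then show ?case
    by (intro uniformly_small_Half) simp_all
next
  case (Minus \<phi> \<psi>)
  then show ?case
    by (intro uniformly_small_Minus) simp_all
next
  case (Sup x \<phi>)
  then show ?case
    using uniformly_small_quantifier[of \<phi> "Sup x \<phi>" x] by simp
next
  case (Inf x \<phi>)
  then show ?case
    using uniformly_small_quantifier[of \<phi> "Inf x \<phi>" x] by simp
qed (simp_all add: uniformly_small_Pred uniformly_small_Dist)

end

section \<open>The associated structure\<close>

locale associated_structure = randomization E L Ms
  for E :: "('w \<Rightarrow> real) \<Rightarrow> real" and L :: "('f, 'p) csig" and Ms :: "'w \<Rightarrow> ('m, 'f, 'p) lstruc" +
  fixes R :: "('n, 'b, 'f, 'p) rstruc" and cM :: "('w \<Rightarrow> 'm) \<Rightarrow> 'n" and cA :: "('w \<Rightarrow> real) \<Rightarrow> 'b"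
  assumes assoc: "is_assoc_struct L Ms E R cM cA"
begin

lemma is_assoc_structD:
  shows completion_main: "is_completion (prodM Ms) (dM E Ms) (mainN R) (distN R) cM"
    and completion_aux: "is_completion unitA (dA E) (auxB R) (distB R) cA"
    and funN_mainN: "\<And>f xs. xs \<in> tuples (mainN R) (farity L f) \<Longrightarrow> funN R f xs \<in> mainN R"
    and funN_cM: "\<And>f as. as \<in> tuples (prodM Ms) (farity L f) \<Longrightarrow> funN R f (map cM as) = cM (pw_fun Ms f as)"
    and funN_cont: "\<And>f. cont_tuples (mainN R) (distN R) (farity L f) (distN R) (funN R f)"
    and predN_auxB: "\<And>p xs. xs \<in> tuples (mainN R) (parity L p) \<Longrightarrow> predN R p xs \<in> auxB R"
    and predN_cM: "\<And>p as. as \<in> tuples (prodM Ms) (parity L p) \<Longrightarrow> predN R p (map cM as) = cA (pw_pred Ms p as)"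
    and predN_cont: "\<And>p. cont_tuples (mainN R) (distN R) (parity L p) (distB R) (predN R p)"
    and dsymN_auxB: "\<And>x y. x \<in> mainN R \<Longrightarrow> y \<in> mainN R \<Longrightarrow> dsymN R x y \<in> auxB R"
    and dsymN_cM: "\<And>a b. a \<in> prodM Ms \<Longrightarrow> b \<in> prodM Ms \<Longrightarrow> dsymN R (cM a) (cM b) = cA (pw_dist Ms a b)"
    and dsymN_cont: "cont_tuples (mainN R) (distN R) 2 (distB R) (\<lambda>xs. dsymN R (xs ! 0) (xs ! 1))"
    and zeroB_cA: "zeroB R = cA (\<lambda>w. 0)"
    and negB_auxB: "\<And>x. x \<in> auxB R \<Longrightarrow> negB R x \<in> auxB R"
    and halfB_auxB: "\<And>x. x \<in> auxB R \<Longrightarrow> halfB R x \<in> auxB R"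
    and minusB_auxB: "\<And>x y. x \<in> auxB R \<Longrightarrow> y \<in> auxB R \<Longrightarrow> minusB R x y \<in> auxB R"
    and negB_cA: "\<And>X. X \<in> unitA \<Longrightarrow> negB R (cA X) = cA (\<lambda>w. 1 - X w)"
    and halfB_cA: "\<And>X. X \<in> unitA \<Longrightarrow> halfB R (cA X) = cA (\<lambda>w. X w / 2)"
    and minusB_cA: "\<And>X Y. X \<in> unitA \<Longrightarrow> Y \<in> unitA \<Longrightarrow> minusB R (cA X) (cA Y) = cA (\<lambda>w. max (X w - Y w) 0)"
    and negB_cont: "cont_tuples (auxB R) (distB R) 1 (distB R) (\<lambda>xs. negB R (xs ! 0))"
    and halfB_cont: "cont_tuples (auxB R) (distB R) 1 (distB R) (\<lambda>xs. halfB R (xs ! 0))"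
    and minusB_cont: "cont_tuples (auxB R) (distB R) 2 (distB R) (\<lambda>xs. minusB R (xs ! 0) (xs ! 1))"
  using assoc unfolding is_assoc_struct_def by meson+

sublocale N: Metric_space "mainN R" "distN R"
  by (rule completion_metric[OF completion_main])

sublocale B: Metric_space "auxB R" "distB R"
  by (rule completion_metric[OF completion_aux])

lemma cM_mainN: "a \<in> prodM Ms \<Longrightarrow> cM a \<in> mainN R"
  by (rule completion_image[OF completion_main])

lemma cA_auxB: "X \<in> unitA \<Longrightarrow> cA X \<in> auxB R"
  by (rule completion_image[OF completion_aux])

lemma distN_cM: "a \<in> prodM Ms \<Longrightarrow> b \<in> prodM Ms \<Longrightarrow> distN R (cM a) (cM b) = dM E Ms a b"
  by (rule completion_isometry[OF completion_main])

lemma distB_cA: "X \<in> unitA \<Longrightarrow> Y \<in> unitA \<Longrightarrow> distB R (cA X) (cA Y) = dA E X Y"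
  by (rule completion_isometry[OF completion_aux])

lemma zeroB_auxB: "zeroB R \<in> auxB R"
  using cA_auxB[of "\<lambda>w. 0"] zeroB_cA by (simp add: unitA_def)

lemma limitin_minusB:
  assumes "\<And>n. xs n \<in> auxB R" "\<And>n. ys n \<in> auxB R"
    and "limitin B.mtopology xs x sequentially" "limitin B.mtopology ys y sequentially"
  shows "limitin B.mtopology (\<lambda>n. minusB R (xs n) (ys n)) (minusB R x y) sequentially"
proof -
  have "limitin B.mtopology (\<lambda>n. (\<lambda>zs. minusB R (zs ! 0) (zs ! 1)) [xs n, ys n])
      ((\<lambda>zs. minusB R (zs ! 0) (zs ! 1)) [x, y]) sequentially"
  proof (rule limitin_cont_tuples[OF B.Metric_space_axioms B.Metric_space_axioms minusB_cont])
    show "minusB R (zs ! 0) (zs ! 1) \<in> auxB R" if "zs \<in> tuples (auxB R) 2" for zs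
      using that minusB_auxB by (simp add: tuples_def subset_iff)
    show "[x, y] \<in> tuples (auxB R) 2" "[xs n, ys n] \<in> tuples (auxB R) 2" for n
      using assms(1,2) B.limitin_mspace[OF assms(3)] B.limitin_mspace[OF assms(4)] by (auto simp: tuples_def)
    show "limitin B.mtopology (\<lambda>k. [xs k, ys k] ! j) ([x, y] ! j) sequentially" if "j < 2" for j
      using that assms(3,4) by (auto simp: less_2_cases_iff)
  qed
  then show ?thesis
    by simp
qed

lemma leB_cA:
  assumes "X \<in> unitA" "Y \<in> unitA" "\<And>w. X w \<le> Y w"
  shows "leB R (cA X) (cA Y)"
proof -
  have "(\<lambda>w. max (X w - Y w) 0) = (\<lambda>w. 0)"
    using assms(3) by (auto simp: max_def)
  then show ?thesis
    unfolding leB_def using minusB_cA[OF assms(1,2)] zeroB_cA by simp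
qed

lemma leB_limit:
  assumes "\<And>n. xs n \<in> auxB R" "\<And>n. ys n \<in> auxB R"
    and "limitin B.mtopology xs x sequentially" "limitin B.mtopology ys y sequentially"
    and "\<And>n. leB R (xs n) (ys n)"
  shows "leB R x y"
proof -
  have "limitin B.mtopology (\<lambda>n. zeroB R) (minusB R x y) sequentially"
    using limitin_minusB[OF assms(1-4)] assms(5) by (simp add: leB_def)
  moreover have "limitin B.mtopology (\<lambda>n. zeroB R) (zeroB R) sequentially"
    using zeroB_auxB by simp
  ultimately show ?thesis
    unfolding leB_def by (rule B.limitin_metric_unique) simp
qed

text \<open>On the dense image of cA, the distance splits as the sum of the two truncated
  differences; by continuity this persists on all of the auxiliary sort.\<close>

lemma leB_antisym:
  assumes x: "x \<in> auxB R" and y: "y \<in> auxB R" and "leB R x y" "leB R y x"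
  shows "x = y"
proof -
  obtain X where X: "\<And>n. X n \<in> unitA" "limitin B.mtopology (\<lambda>n. cA (X n)) x sequentially"
    using completion_dense_sequence[OF completion_aux x] by blast
  obtain Y where Y: "\<And>n. Y n \<in> unitA" "limitin B.mtopology (\<lambda>n. cA (Y n)) y sequentially"
    using completion_dense_sequence[OF completion_aux y] by blast
  have split: "distB R (cA (X n)) (cA (Y n)) =
      distB R (minusB R (cA (X n)) (cA (Y n))) (zeroB R) + distB R (minusB R (cA (Y n)) (cA (X n))) (zeroB R)" for n
  proof -
    let ?P = "\<lambda>w. max (X n w - Y n w) 0" and ?Q = "\<lambda>w. max (Y n w - X n w) 0"
    have "?P w \<in> {0..1} \<and> ?Q w \<in> {0..1} \<and> ?P w + ?Q w \<in> {0..1}" for w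
      using X(1)[of n] Y(1)[of n] unfolding unitA_def by (auto simp: max_def dest!: spec[of _ w])
    then have PQ: "?P \<in> unitA" "?Q \<in> unitA" "(\<lambda>w. ?P w + ?Q w) \<in> unitA"
      unfolding unitA_def by auto
    have "distB R (cA (X n)) (cA (Y n)) = E (\<lambda>w. ?P w + ?Q w)"
      unfolding distB_cA[OF X(1) Y(1)] dA_def by (rule arg_cong[where f = E]) (auto simp: max_def)
    also have "\<dots> = E ?P + E ?Q"
      by (rule E_add[OF PQ])
    finally show ?thesis
      using distB_cA[OF PQ(1) const_unitA] distB_cA[OF PQ(2) const_unitA]
      by (simp add: minusB_cA[OF X(1) Y(1)] minusB_cA[OF Y(1) X(1)] zeroB_cA dA_def)
  qed
  have "(\<lambda>n. distB R (cA (X n)) (cA (Y n))) \<longlonglongrightarrow> distB R x y"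
    by (rule B.limitin_mdist[OF X(2) Y(2) cA_auxB[OF X(1)] cA_auxB[OF Y(1)]])
  moreover have "(\<lambda>n. distB R (cA (X n)) (cA (Y n))) \<longlonglongrightarrow> distB R (minusB R x y) (zeroB R) + distB R (minusB R y x) (zeroB R)"
    unfolding split
    using limitin_minusB[OF cA_auxB[OF X(1)] cA_auxB[OF Y(1)] X(2) Y(2)]
      limitin_minusB[OF cA_auxB[OF Y(1)] cA_auxB[OF X(1)] Y(2) X(2)] zeroB_auxB
    by (intro tendsto_add B.limitin_mdist) (auto intro: minusB_auxB cA_auxB X(1) Y(1))
  ultimately have "distB R x y = 0"
    using assms(3,4) zeroB_auxB unfolding leB_def by (simp add: LIMSEQ_unique)
  then show ?thesis
    using x y by simp
qed

lemma SupB_eqI: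
  assumes "v \<in> auxB R" "\<And>s. s \<in> S \<Longrightarrow> leB R s v" "\<And>u. u \<in> auxB R \<Longrightarrow> \<forall>s\<in>S. leB R s u \<Longrightarrow> leB R v u"
  shows "SupB R S = v"
  unfolding SupB_def
proof (rule the_equality)
  fix z
  assume "z \<in> auxB R \<and> (\<forall>s\<in>S. leB R s z) \<and> (\<forall>u\<in>auxB R. (\<forall>s\<in>S. leB R s u) \<longrightarrow> leB R z u)"
  with assms show "z = v"
    by (intro leB_antisym) auto
qed (use assms in auto)

lemma InfB_eqI:
  assumes "v \<in> auxB R" "\<And>s. s \<in> S \<Longrightarrow> leB R v s" "\<And>u. u \<in> auxB R \<Longrightarrow> \<forall>s\<in>S. leB R u s \<Longrightarrow> leB R u v"
  shows "InfB R S = v"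
  unfolding InfB_def
proof (rule the_equality)
  fix z
  assume "z \<in> auxB R \<and> (\<forall>s\<in>S. leB R z s) \<and> (\<forall>u\<in>auxB R. (\<forall>s\<in>S. leB R u s) \<longrightarrow> leB R u z)"
  with assms show "z = v"
    by (intro leB_antisym) auto
qed (use assms in auto)

lemma limitin_map_args:
  assumes T: "Metric_space T d'" and cont: "cont_tuples (mainN R) (distN R) (length ts) d' g"
    and closed: "\<And>zs. zs \<in> tuples (mainN R) (length ts) \<Longrightarrow> g zs \<in> T"
    and args: "\<And>k t. t \<in> set ts \<Longrightarrow> u k t \<in> mainN R"
    and lim: "\<And>t. t \<in> set ts \<Longrightarrow> limitin N.mtopology (\<lambda>k. u k t) (v t) sequentially"
  shows "limitin (Metric_space.mtopology T d') (\<lambda>k. g (map (u k) ts)) (g (map v ts)) sequentially"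
proof (rule limitin_cont_tuples[OF N.Metric_space_axioms T cont closed])
  show "map v ts \<in> tuples (mainN R) (length ts)" "map (u k) ts \<in> tuples (mainN R) (length ts)" for k
    using args N.limitin_mspace[OF lim] by (auto simp: tuples_def)
  show "limitin N.mtopology (\<lambda>k. map (u k) ts ! j) (map v ts ! j) sequentially" if "j < length ts" for j
    using lim[OF nth_mem[OF that]] that by simp
qed

text \<open>Convergence is uniform in the variable index, matching the uniformity of
  uniformly_small over all coordinates of an assignment.\<close>

definition approximates :: "(nat \<Rightarrow> nat \<Rightarrow> 'w \<Rightarrow> 'm) \<Rightarrow> (nat \<Rightarrow> 'n) \<Rightarrow> bool" where
  "approximates A \<tau> \<longleftrightarrow> (\<forall>n i. A n i \<in> prodM Ms) \<and>
     (\<forall>\<epsilon>>0. \<exists>N. \<forall>n\<ge>N. \<forall>i. distN R (cM (A n i)) (\<tau> i) < \<epsilon>)"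

lemma approximates_prodM: "approximates A \<tau> \<Longrightarrow> \<forall>i. A n i \<in> prodM Ms"
  unfolding approximates_def by blast

lemma approximatesD:
  "approximates A \<tau> \<Longrightarrow> 0 < \<epsilon> \<Longrightarrow> \<exists>N. \<forall>n\<ge>N. \<forall>i. distN R (cM (A n i)) (\<tau> i) < \<epsilon>"
  unfolding approximates_def by blast

lemma approximates_exists:
  assumes "\<forall>i. \<tau> i \<in> mainN R"
  obtains A where "approximates A \<tau>"
proof -
  have "\<forall>n i. \<exists>a\<in>prodM Ms. distN R (\<tau> i) (cM a) < 1 / real (Suc n)"
    using completion_dense[OF completion_main] assms by simp
  then obtain A where A: "\<And>n i. A n i \<in> prodM Ms" "\<And>n i. distN R (\<tau> i) (cM (A n i)) < 1 / real (Suc n)"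
    by metis
  have "approximates A \<tau>"
    unfolding approximates_def
  proof (intro conjI allI impI)
    fix \<epsilon> :: real
    assume "0 < \<epsilon>"
    then obtain N where N: "1 / real (Suc N) < \<epsilon>"
      using nat_approx_posE by blast
    have "distN R (cM (A n i)) (\<tau> i) < \<epsilon>" if "N \<le> n" for n i
    proof -
      have "1 / real (Suc n) \<le> 1 / real (Suc N)"
        using that by (simp add: frac_le)
      then show ?thesis
        using A(2)[of i n] N N.commute[of "\<tau> i" "cM (A n i)"] by linarith
    qed
    then show "\<exists>N. \<forall>n\<ge>N. \<forall>i. distN R (cM (A n i)) (\<tau> i) < \<epsilon>"
      by blast
  qed (rule A(1))
  then show ?thesis
    by (rule that)
qed

lemma approximates_const: "\<forall>i. as i \<in> prodM Ms \<Longrightarrow> approximates (\<lambda>n. as) (\<lambda>i. cM (as i))"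
  unfolding approximates_def using cM_mainN by simp

lemma approximates_limitin:
  "approximates A \<tau> \<Longrightarrow> \<tau> i \<in> mainN R \<Longrightarrow> limitin N.mtopology (\<lambda>n. cM (A n i)) (\<tau> i) sequentially"
  unfolding approximates_def N.limit_metric_sequentially using cM_mainN by meson

lemma approximates_update:
  assumes "approximates A \<tau>" "\<beta> \<in> mainN R"
  obtains bs where "\<And>n. bs n \<in> prodM Ms" "approximates (\<lambda>n. (A n)(x := bs n)) (\<tau>(x := \<beta>))"
proof -
  obtain B where B: "approximates B (\<lambda>i. \<beta>)"
    by (rule approximates_exists[of "\<lambda>i. \<beta>"]) (use assms(2) in auto)
  have "approximates (\<lambda>n. (A n)(x := B n 0)) (\<tau>(x := \<beta>))"
    unfolding approximates_def
  proof (intro conjI allI impI)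
    show "((A n)(x := B n 0)) i \<in> prodM Ms" for n i
      using approximates_prodM[OF assms(1)] approximates_prodM[OF B] by simp
    fix \<epsilon> :: real
    assume "0 < \<epsilon>"
    obtain N1 where N1: "\<And>n i. N1 \<le> n \<Longrightarrow> distN R (cM (A n i)) (\<tau> i) < \<epsilon>"
      using approximatesD[OF assms(1) \<open>0 < \<epsilon>\<close>] by blast
    obtain N2 where N2: "\<And>n i. N2 \<le> n \<Longrightarrow> distN R (cM (B n i)) \<beta> < \<epsilon>"
      using approximatesD[OF B \<open>0 < \<epsilon>\<close>] by blast
    show "\<exists>N. \<forall>n\<ge>N. \<forall>i. distN R (cM (((A n)(x := B n 0)) i)) ((\<tau>(x := \<beta>)) i) < \<epsilon>"
    proof (intro exI[of _ "N1 + N2"] allI impI)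
      fix n i
      assume "N1 + N2 \<le> n"
      then show "distN R (cM (((A n)(x := B n 0)) i)) ((\<tau>(x := \<beta>)) i) < \<epsilon>"
        using N1[of n i] N2[of n 0] by (cases "i = x") simp_all
    qed
  qed
  then show ?thesis
    using approximates_prodM[OF B] by (intro that[of "\<lambda>n. B n 0"]) simp_all
qed

lemma dM_lt_through:
  assumes "a \<in> prodM Ms" "b \<in> prodM Ms" "t \<in> mainN R"
    and "distN R (cM a) t < r" "distN R (cM b) t < s"
  shows "dM E Ms a b < r + s"
  using N.triangle[OF cM_mainN[OF assms(1)] assms(3) cM_mainN[OF assms(2)]] N.commute[of t "cM b"]
    distN_cM[OF assms(1,2)] assms(4,5) by linarith

lemma limitin_rv_trm:
  assumes "wf_trm L t" "\<forall>i. \<tau> i \<in> mainN R" "approximates A \<tau>"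
  shows "limitin N.mtopology (\<lambda>n. cM (rv_trm Ms (A n) t)) (tvalR R \<tau> t) sequentially"
  using assms(1)
proof (induction t)
  case (Var i)
  then show ?case
    using approximates_limitin[OF assms(3)] assms(2) by simp
next
  case (Fn f ts)
  then have wf: "length ts = farity L f" "\<forall>t\<in>set ts. wf_trm L t"
    by auto
  have "cM (rv_trm Ms (A n) (Fn f ts)) = funN R f (map (\<lambda>t. cM (rv_trm Ms (A n) t)) ts)" for n
  proof -
    have "map (rv_trm Ms (A n)) ts \<in> tuples (prodM Ms) (farity L f)"
      using rv_trm_prodM approximates_prodM[OF assms(3)] wf by (auto simp: tuples_def)
    from funN_cM[OF this] show ?thesis
      by (simp add: rv_trm_Fn o_def)
  qed
  moreover have "limitin N.mtopology (\<lambda>n. funN R f (map (\<lambda>t. cM (rv_trm Ms (A n) t)) ts))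
      (funN R f (map (tvalR R \<tau>) ts)) sequentially"
  proof (rule limitin_map_args[OF N.Metric_space_axioms])
    show "cont_tuples (mainN R) (distN R) (length ts) (distN R) (funN R f)"
      using funN_cont wf(1) by simp
    show "funN R f zs \<in> mainN R" if "zs \<in> tuples (mainN R) (length ts)" for zs
      using funN_mainN that wf(1) by simp
    show "cM (rv_trm Ms (A k) t) \<in> mainN R" if "t \<in> set ts" for k t
      using cM_mainN rv_trm_prodM approximates_prodM[OF assms(3)] wf(2) that by simp
    show "limitin N.mtopology (\<lambda>k. cM (rv_trm Ms (A k) t)) (tvalR R \<tau> t) sequentially" if "t \<in> set ts" for t
      using Fn.IH that wf(2) by simp
  qed
  ultimately show ?case
    by simp
qed


lemma dA_rv_fml: "dA E (rv_fml Ms A \<phi>) (rv_fml Ms B \<phi>) = E (rv_fml_dist \<phi> A B)"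
  by (simp add: dA_def rv_fml_dist_def)

lemma limitin_rv_fml_exists:
  assumes "wf_fml L \<phi>" "approximates A \<tau>" "\<forall>i. \<tau> i \<in> mainN R"
  obtains v where "limitin B.mtopology (\<lambda>n. cA (rv_fml Ms (A n) \<phi>)) v sequentially"
proof -
  have unit: "rv_fml Ms (A n) \<phi> \<in> unitA" for n
    by (rule rv_fml_unitA[OF assms(1) approximates_prodM[OF assms(2)]])
  have "B.MCauchy (\<lambda>n. cA (rv_fml Ms (A n) \<phi>))"
    unfolding B.MCauchy_def
  proof (intro conjI allI impI)
    show "range (\<lambda>n. cA (rv_fml Ms (A n) \<phi>)) \<subseteq> auxB R"
      using cA_auxB[OF unit] by blast
    fix \<epsilon> :: real
    assume "0 < \<epsilon>"
    then obtain \<delta> where "0 < \<delta>" and \<delta>: "\<And>A B. \<forall>i. A i \<in> prodM Ms \<Longrightarrow> \<forall>i. B i \<in> prodM Ms \<Longrightarrow>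
        \<forall>i. dM E Ms (A i) (B i) < \<delta> \<Longrightarrow> E (rv_fml_dist \<phi> A B) < \<epsilon>"
      using uniformly_smallD[OF uniformly_small_rv_fml[OF assms(1)]] by blast
    then obtain N where N: "\<forall>n\<ge>N. \<forall>i. distN R (cM (A n i)) (\<tau> i) < \<delta> / 2"
      using approximatesD[OF assms(2)] by (meson half_gt_zero)
    have "distB R (cA (rv_fml Ms (A n) \<phi>)) (cA (rv_fml Ms (A n') \<phi>)) < \<epsilon>" if "N \<le> n" "N \<le> n'" for n n'
    proof -
      have "\<forall>i. dM E Ms (A n i) (A n' i) < \<delta>"
        using dM_lt_through[of "A n i" "A n' i" "\<tau> i" "\<delta> / 2" "\<delta> / 2" for i] N that
          approximates_prodM[OF assms(2)] assms(3) by simp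
      then show ?thesis
        using \<delta> approximates_prodM[OF assms(2)] by (simp add: distB_cA[OF unit unit] dA_rv_fml)
    qed
    then show "\<exists>N. \<forall>n n'. N \<le> n \<longrightarrow> N \<le> n' \<longrightarrow> distB R (cA (rv_fml Ms (A n) \<phi>)) (cA (rv_fml Ms (A n') \<phi>)) < \<epsilon>"
      by blast
  qed
  then show ?thesis
    using completion_complete[OF completion_aux] that unfolding B.mcomplete_def by blast
qed

text \<open>The identity itself does not survive the induction step for quantifiers, whose
  interpretation ranges over the whole completion; this limit form, stated for arbitrary
  assignments in the completion, does.\<close>

definition limit_semantics :: "('f, 'p) fml \<Rightarrow> bool" where
  "limit_semantics \<phi> \<longleftrightarrow> (\<forall>\<tau> A. (\<forall>i. \<tau> i \<in> mainN R) \<longrightarrow> approximates A \<tau> \<longrightarrow>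
     limitin B.mtopology (\<lambda>n. cA (rv_fml Ms (A n) \<phi>)) (fvalR R \<tau> \<phi>) sequentially)"

lemma limit_semanticsD:
  "limit_semantics \<phi> \<Longrightarrow> \<forall>i. \<tau> i \<in> mainN R \<Longrightarrow> approximates A \<tau> \<Longrightarrow>
     limitin B.mtopology (\<lambda>n. cA (rv_fml Ms (A n) \<phi>)) (fvalR R \<tau> \<phi>) sequentially"
  unfolding limit_semantics_def by blast

lemma fvalR_auxB: "limit_semantics \<phi> \<Longrightarrow> \<forall>i. \<tau> i \<in> mainN R \<Longrightarrow> fvalR R \<tau> \<phi> \<in> auxB R"
  using approximates_exists B.limitin_mspace limit_semanticsD by metis

lemma fvalR_near:
  assumes "wf_fml L \<phi>" "limit_semantics \<phi>" "0 < \<epsilon>"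
  obtains \<delta> where "0 < \<delta>" "\<And>\<tau> C. \<forall>i. \<tau> i \<in> mainN R \<Longrightarrow> \<forall>i. C i \<in> prodM Ms \<Longrightarrow>
     \<forall>i. distN R (cM (C i)) (\<tau> i) < \<delta> \<Longrightarrow> distB R (cA (rv_fml Ms C \<phi>)) (fvalR R \<tau> \<phi>) \<le> \<epsilon>"
proof -
  obtain \<delta> where "0 < \<delta>" and \<delta>: "\<And>A B. \<forall>i. A i \<in> prodM Ms \<Longrightarrow> \<forall>i. B i \<in> prodM Ms \<Longrightarrow>
      \<forall>i. dM E Ms (A i) (B i) < \<delta> \<Longrightarrow> E (rv_fml_dist \<phi> A B) < \<epsilon>"
    using uniformly_smallD[OF uniformly_small_rv_fml[OF assms(1)] assms(3)] by blast
  have "distB R (cA (rv_fml Ms C \<phi>)) (fvalR R \<tau> \<phi>) \<le> \<epsilon>"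
    if \<tau>: "\<forall>i. \<tau> i \<in> mainN R" and C: "\<forall>i. C i \<in> prodM Ms"
      and close: "\<forall>i. distN R (cM (C i)) (\<tau> i) < \<delta> / 2" for \<tau> C
  proof -
    obtain A where A: "approximates A \<tau>"
      using approximates_exists[OF \<tau>] by blast
    have unit: "rv_fml Ms (A n) \<phi> \<in> unitA" "rv_fml Ms C \<phi> \<in> unitA" for n
      using rv_fml_unitA[OF assms(1)] approximates_prodM[OF A] C by auto
    have "(\<lambda>n. distB R (cA (rv_fml Ms C \<phi>)) (cA (rv_fml Ms (A n) \<phi>))) \<longlonglongrightarrow> distB R (cA (rv_fml Ms C \<phi>)) (fvalR R \<tau> \<phi>)"
      by (rule B.limitin_mdist[OF _ limit_semanticsD[OF assms(2) \<tau> A]]) (use cA_auxB unit in auto)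
    moreover obtain N where N: "\<forall>n\<ge>N. \<forall>i. distN R (cM (A n i)) (\<tau> i) < \<delta> / 2"
      using approximatesD[OF A] \<open>0 < \<delta>\<close> by (meson half_gt_zero)
    have "distB R (cA (rv_fml Ms C \<phi>)) (cA (rv_fml Ms (A n) \<phi>)) \<le> \<epsilon>" if "N \<le> n" for n
    proof -
      have "\<forall>i. dM E Ms (C i) (A n i) < \<delta>"
        using dM_lt_through[of "C i" "A n i" "\<tau> i" "\<delta> / 2" "\<delta> / 2" for i] N that close C
          approximates_prodM[OF A] \<tau> by simp
      then show ?thesis
        using \<delta>[OF C approximates_prodM[OF A]] by (simp add: distB_cA[OF unit(2) unit(1)] dA_rv_fml less_imp_le)
    qed
    ultimately show ?thesis
      by (intro LIMSEQ_le_const2) auto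
  qed
  then show ?thesis
    using that[of "\<delta> / 2"] \<open>0 < \<delta>\<close> by simp
qed

lemma limitin_unaryB:
  assumes cont: "cont_tuples (auxB R) (distB R) 1 (distB R) (\<lambda>xs. h (xs ! 0))"
    and closed: "\<And>x. x \<in> auxB R \<Longrightarrow> h x \<in> auxB R"
    and "\<And>n. xs n \<in> auxB R" "limitin B.mtopology xs x sequentially"
  shows "limitin B.mtopology (\<lambda>n. h (xs n)) (h x) sequentially"
proof -
  have "limitin B.mtopology (\<lambda>n. (\<lambda>zs. h (zs ! 0)) [xs n]) ((\<lambda>zs. h (zs ! 0)) [x]) sequentially"
  proof (rule limitin_cont_tuples[OF B.Metric_space_axioms B.Metric_space_axioms cont])
    show "h (zs ! 0) \<in> auxB R" if "zs \<in> tuples (auxB R) 1" for zs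
      using that closed by (simp add: tuples_def subset_iff)
    show "[x] \<in> tuples (auxB R) 1" "[xs n] \<in> tuples (auxB R) 1" for n
      using assms(3) B.limitin_mspace[OF assms(4)] by (auto simp: tuples_def)
  qed (use assms(4) in simp)
  then show ?thesis
    by simp
qed

lemma limit_semantics_Pred:
  assumes "wf_fml L (Pred p ts)"
  shows "limit_semantics (Pred p ts)"
  unfolding limit_semantics_def
proof (intro allI impI)
  fix \<tau> A
  assume \<tau>: "\<forall>i. \<tau> i \<in> mainN R" and A: "approximates A \<tau>"
  have wf: "length ts = parity L p" "\<forall>t\<in>set ts. wf_trm L t"
    using assms by auto
  have "cA (rv_fml Ms (A n) (Pred p ts)) = predN R p (map (\<lambda>t. cM (rv_trm Ms (A n) t)) ts)" for n
  proof -
    have "map (rv_trm Ms (A n)) ts \<in> tuples (prodM Ms) (parity L p)"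
      using rv_trm_prodM approximates_prodM[OF A] wf by (auto simp: tuples_def)
    from predN_cM[OF this] show ?thesis
      by (simp add: rv_fml_Pred o_def)
  qed
  moreover have "limitin B.mtopology (\<lambda>n. predN R p (map (\<lambda>t. cM (rv_trm Ms (A n) t)) ts))
      (predN R p (map (tvalR R \<tau>) ts)) sequentially"
  proof (rule limitin_map_args[OF B.Metric_space_axioms, where g = "predN R p"
        and u = "\<lambda>k t. cM (rv_trm Ms (A k) t)" and v = "tvalR R \<tau>"])
    show "cont_tuples (mainN R) (distN R) (length ts) (distB R) (predN R p)"
      using predN_cont wf(1) by simp
    show "predN R p zs \<in> auxB R" if "zs \<in> tuples (mainN R) (length ts)" for zs
      using predN_auxB that wf(1) by simp
    show "cM (rv_trm Ms (A k) t) \<in> mainN R" if "t \<in> set ts" for k t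
      using cM_mainN rv_trm_prodM approximates_prodM[OF A] wf(2) that by simp
    show "limitin N.mtopology (\<lambda>k. cM (rv_trm Ms (A k) t)) (tvalR R \<tau> t) sequentially" if "t \<in> set ts" for t
      using limitin_rv_trm \<tau> A wf(2) that by simp
  qed
  ultimately show "limitin B.mtopology (\<lambda>n. cA (rv_fml Ms (A n) (Pred p ts))) (fvalR R \<tau> (Pred p ts)) sequentially"
    by simp
qed

lemma limit_semantics_Dist:
  assumes "wf_fml L (Dist t u)"
  shows "limit_semantics (Dist t u)"
  unfolding limit_semantics_def
proof (intro allI impI)
  fix \<tau> A
  assume \<tau>: "\<forall>i. \<tau> i \<in> mainN R" and A: "approximates A \<tau>"
  have wf: "\<forall>s\<in>set [t, u]. wf_trm L s"
    using assms by auto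
  have "cA (rv_fml Ms (A n) (Dist t u)) = dsymN R (cM (rv_trm Ms (A n) t)) (cM (rv_trm Ms (A n) u))" for n
    using dsymN_cM rv_trm_prodM approximates_prodM[OF A] wf by (simp add: rv_fml_Dist)
  moreover have "limitin B.mtopology (\<lambda>n. (\<lambda>xs. dsymN R (xs ! 0) (xs ! 1)) (map (\<lambda>s. cM (rv_trm Ms (A n) s)) [t, u]))
      ((\<lambda>xs. dsymN R (xs ! 0) (xs ! 1)) (map (tvalR R \<tau>) [t, u])) sequentially"
  proof (rule limitin_map_args[OF B.Metric_space_axioms, where g = "\<lambda>xs. dsymN R (xs ! 0) (xs ! 1)"
        and u = "\<lambda>k s. cM (rv_trm Ms (A k) s)" and v = "tvalR R \<tau>"])
    show "cont_tuples (mainN R) (distN R) (length [t, u]) (distB R) (\<lambda>xs. dsymN R (xs ! 0) (xs ! 1))"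
      using dsymN_cont by (simp add: numeral_2_eq_2)
    show "dsymN R (zs ! 0) (zs ! 1) \<in> auxB R" if "zs \<in> tuples (mainN R) (length [t, u])" for zs
      using dsymN_auxB that by (simp add: tuples_def subset_iff)
    show "cM (rv_trm Ms (A k) s) \<in> mainN R" if "s \<in> set [t, u]" for k s
      using cM_mainN[OF rv_trm_prodM[OF _ approximates_prodM[OF A]]] wf that by blast
    show "limitin N.mtopology (\<lambda>k. cM (rv_trm Ms (A k) s)) (tvalR R \<tau> s) sequentially" if "s \<in> set [t, u]" for s
      using limitin_rv_trm[OF _ \<tau> A] wf that by blast
  qed
  ultimately show "limitin B.mtopology (\<lambda>n. cA (rv_fml Ms (A n) (Dist t u))) (fvalR R \<tau> (Dist t u)) sequentially"
    by simp
qed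

lemma limit_semantics_Zero: "limit_semantics Zero"
  unfolding limit_semantics_def using zeroB_auxB by (simp add: rv_fml_def zeroB_cA)

lemma limit_semantics_Neg:
  assumes "wf_fml L \<phi>" "limit_semantics \<phi>"
  shows "limit_semantics (Neg \<phi>)"
  unfolding limit_semantics_def
proof (intro allI impI)
  fix \<tau> A
  assume \<tau>: "\<forall>i. \<tau> i \<in> mainN R" and A: "approximates A \<tau>"
  have unit: "rv_fml Ms (A n) \<phi> \<in> unitA" for n
    by (rule rv_fml_unitA[OF assms(1) approximates_prodM[OF A]])
  have "limitin B.mtopology (\<lambda>n. negB R (cA (rv_fml Ms (A n) \<phi>))) (negB R (fvalR R \<tau> \<phi>)) sequentially"
    by (rule limitin_unaryB[OF negB_cont negB_auxB cA_auxB[OF unit] limit_semanticsD[OF assms(2) \<tau> A]])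
  then show "limitin B.mtopology (\<lambda>n. cA (rv_fml Ms (A n) (Neg \<phi>))) (fvalR R \<tau> (Neg \<phi>)) sequentially"
    using negB_cA[OF unit] by (simp add: rv_fml_def)
qed

lemma limit_semantics_Half:
  assumes "wf_fml L \<phi>" "limit_semantics \<phi>"
  shows "limit_semantics (Half \<phi>)"
  unfolding limit_semantics_def
proof (intro allI impI)
  fix \<tau> A
  assume \<tau>: "\<forall>i. \<tau> i \<in> mainN R" and A: "approximates A \<tau>"
  have unit: "rv_fml Ms (A n) \<phi> \<in> unitA" for n
    by (rule rv_fml_unitA[OF assms(1) approximates_prodM[OF A]])
  have "limitin B.mtopology (\<lambda>n. halfB R (cA (rv_fml Ms (A n) \<phi>))) (halfB R (fvalR R \<tau> \<phi>)) sequentially"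
    by (rule limitin_unaryB[OF halfB_cont halfB_auxB cA_auxB[OF unit] limit_semanticsD[OF assms(2) \<tau> A]])
  then show "limitin B.mtopology (\<lambda>n. cA (rv_fml Ms (A n) (Half \<phi>))) (fvalR R \<tau> (Half \<phi>)) sequentially"
    using halfB_cA[OF unit] by (simp add: rv_fml_def)
qed

lemma limit_semantics_Minus:
  assumes "wf_fml L \<phi>" "wf_fml L \<psi>" "limit_semantics \<phi>" "limit_semantics \<psi>"
  shows "limit_semantics (Minus \<phi> \<psi>)"
  unfolding limit_semantics_def
proof (intro allI impI)
  fix \<tau> A
  assume \<tau>: "\<forall>i. \<tau> i \<in> mainN R" and A: "approximates A \<tau>"
  have unit: "rv_fml Ms (A n) \<phi> \<in> unitA" "rv_fml Ms (A n) \<psi> \<in> unitA" for n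
    using rv_fml_unitA[OF _ approximates_prodM[OF A]] assms(1,2) by auto
  have "limitin B.mtopology (\<lambda>n. minusB R (cA (rv_fml Ms (A n) \<phi>)) (cA (rv_fml Ms (A n) \<psi>)))
      (minusB R (fvalR R \<tau> \<phi>) (fvalR R \<tau> \<psi>)) sequentially"
    by (rule limitin_minusB[OF cA_auxB[OF unit(1)] cA_auxB[OF unit(2)]
          limit_semanticsD[OF assms(3) \<tau> A] limit_semanticsD[OF assms(4) \<tau> A]])
  then show "limitin B.mtopology (\<lambda>n. cA (rv_fml Ms (A n) (Minus \<phi> \<psi>))) (fvalR R \<tau> (Minus \<phi> \<psi>)) sequentially"
    using minusB_cA[OF unit] by (simp add: rv_fml_def)
qed

lemma tendsto_distB_fvalR_upd:
  assumes "wf_fml L \<phi>" "limit_semantics \<phi>" "approximates A \<tau>" "\<forall>i. \<tau> i \<in> mainN R"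
    and bs: "\<And>n. bs n \<in> prodM Ms"
  shows "(\<lambda>n. distB R (fvalR R (\<tau>(x := cM (bs n))) \<phi>) (cA (rv_fml Ms ((A n)(x := bs n)) \<phi>))) \<longlonglongrightarrow> 0"
  unfolding LIMSEQ_iff
proof (intro allI impI)
  fix r :: real
  assume "0 < r"
  then obtain \<delta> where "0 < \<delta>" and \<delta>: "\<And>\<tau> C. \<forall>i. \<tau> i \<in> mainN R \<Longrightarrow> \<forall>i. C i \<in> prodM Ms \<Longrightarrow>
      \<forall>i. distN R (cM (C i)) (\<tau> i) < \<delta> \<Longrightarrow> distB R (cA (rv_fml Ms C \<phi>)) (fvalR R \<tau> \<phi>) \<le> r / 2"
    using fvalR_near[OF assms(1,2) half_gt_zero[OF \<open>0 < r\<close>]] by blast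
  obtain N where N: "\<forall>n\<ge>N. \<forall>i. distN R (cM (A n i)) (\<tau> i) < \<delta>"
    using approximatesD[OF assms(3) \<open>0 < \<delta>\<close>] by blast
  have "distB R (fvalR R (\<tau>(x := cM (bs n))) \<phi>) (cA (rv_fml Ms ((A n)(x := bs n)) \<phi>)) \<le> r / 2"
    if "N \<le> n" for n
  proof -
    have \<tau>n: "\<forall>i. (\<tau>(x := cM (bs n))) i \<in> mainN R"
      using assms(4) cM_mainN[OF bs] by simp
    have An: "\<forall>i. ((A n)(x := bs n)) i \<in> prodM Ms"
      using approximates_prodM[OF assms(3)] bs by simp
    have "\<forall>i. distN R (cM (((A n)(x := bs n)) i)) ((\<tau>(x := cM (bs n))) i) < \<delta>"
      using N that \<open>0 < \<delta>\<close> cM_mainN[OF bs] by simp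
    then have "distB R (cA (rv_fml Ms ((A n)(x := bs n)) \<phi>)) (fvalR R (\<tau>(x := cM (bs n))) \<phi>) \<le> r / 2"
      by (rule \<delta>[OF \<tau>n An])
    then show ?thesis
      by (simp add: B.commute)
  qed
  then show "\<exists>N. \<forall>n\<ge>N. norm (distB R (fvalR R (\<tau>(x := cM (bs n))) \<phi>) (cA (rv_fml Ms ((A n)(x := bs n)) \<phi>)) - 0) < r"
    using \<open>0 < r\<close> B.nonneg by (intro exI[of _ N]) (auto intro: le_less_trans[of _ "r / 2"])
qed

lemma limitin_witness_values:
  assumes "wf_fml L \<phi>" "limit_semantics \<phi>" "approximates A \<tau>" "\<forall>i. \<tau> i \<in> mainN R"
    and bs: "\<And>n. bs n \<in> prodM Ms" and Z: "\<And>n. Z n \<in> unitA"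
    and lim: "limitin B.mtopology (\<lambda>n. cA (Z n)) v sequentially"
    and near: "\<And>n w. \<bar>Z n w - rv_fml Ms ((A n)(x := bs n)) \<phi> w\<bar> \<le> 1 / real (Suc n)"
  shows "limitin B.mtopology (\<lambda>n. fvalR R (\<tau>(x := cM (bs n))) \<phi>) v sequentially"
proof -
  have unit: "rv_fml Ms ((A n)(x := bs n)) \<phi> \<in> unitA" for n
    using rv_fml_unitA[OF assms(1)] approximates_prodM[OF assms(3)] bs by simp
  have "distB R (cA (rv_fml Ms ((A n)(x := bs n)) \<phi>)) (cA (Z n)) \<le> E (\<lambda>w. 1 / real (Suc n))" for n
    unfolding distB_cA[OF unit Z] dA_def
    by (rule E_mono[OF abs_diff_unitA[OF unit Z] const_unitA]) (use near in \<open>auto simp: abs_minus_commute\<close>)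
  then have "(\<lambda>n. distB R (cA (rv_fml Ms ((A n)(x := bs n)) \<phi>)) (cA (Z n))) \<longlonglongrightarrow> 0"
    by (intro real_tendsto_sandwich[OF _ _ tendsto_const LIMSEQ_inverse_real_of_nat])
      (simp_all add: B.nonneg E_const_inverse inverse_eq_divide del: of_nat_Suc)
  then have "limitin B.mtopology (\<lambda>n. cA (rv_fml Ms ((A n)(x := bs n)) \<phi>)) v sequentially"
    by (rule B.limitin_close_sequence[OF lim cA_auxB[OF unit] cA_auxB[OF Z]])
  then show ?thesis
    using B.limitin_close_sequence tendsto_distB_fvalR_upd[OF assms(1-4) bs] fvalR_auxB[OF assms(2)]
      assms(4) cM_mainN[OF bs] cA_auxB[OF unit] by simp
qed

lemma Sup_limit_upper_bound:
  assumes "wf_fml L \<phi>" "limit_semantics \<phi>" "\<forall>i. \<tau> i \<in> mainN R" "approximates A \<tau>"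
    and v: "limitin B.mtopology (\<lambda>n. cA (rv_fml Ms (A n) (Sup x \<phi>))) v sequentially"
    and "\<beta> \<in> mainN R"
  shows "leB R (fvalR R (\<tau>(x := \<beta>)) \<phi>) v"
proof -
  have An: "\<forall>i. A n i \<in> prodM Ms" for n
    by (rule approximates_prodM[OF assms(4)])
  have Z: "rv_fml Ms (A n) (Sup x \<phi>) \<in> unitA" for n
    using rv_fml_unitA[OF _ An] assms(1) by simp
  obtain bs where bs: "\<And>n. bs n \<in> prodM Ms" "approximates (\<lambda>n. (A n)(x := bs n)) (\<tau>(x := \<beta>))"
    using approximates_update[OF assms(4,6)] by blast
  have unit: "rv_fml Ms ((A n)(x := bs n)) \<phi> \<in> unitA" for n
    using rv_fml_unitA[OF assms(1)] An bs(1) by simp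
  show ?thesis
  proof (rule leB_limit[OF cA_auxB[OF unit] cA_auxB[OF Z] _ v])
    show "limitin B.mtopology (\<lambda>n. cA (rv_fml Ms ((A n)(x := bs n)) \<phi>)) (fvalR R (\<tau>(x := \<beta>)) \<phi>) sequentially"
      using limit_semanticsD[OF assms(2) _ bs(2)] assms(3,6) by simp
    show "leB R (cA (rv_fml Ms ((A n)(x := bs n)) \<phi>)) (cA (rv_fml Ms (A n) (Sup x \<phi>)))" for n
      by (rule leB_cA[OF unit Z rv_fml_Sup_upper[OF assms(1) An bs(1)]])
  qed
qed

lemma Sup_limit_least_upper_bound:
  assumes "wf_fml L \<phi>" "limit_semantics \<phi>" "\<forall>i. \<tau> i \<in> mainN R" "approximates A \<tau>"
    and v: "limitin B.mtopology (\<lambda>n. cA (rv_fml Ms (A n) (Sup x \<phi>))) v sequentially"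
    and U: "U \<in> auxB R" "\<And>\<beta>. \<beta> \<in> mainN R \<Longrightarrow> leB R (fvalR R (\<tau>(x := \<beta>)) \<phi>) U"
  shows "leB R v U"
proof -
  have An: "\<forall>i. A n i \<in> prodM Ms" for n
    by (rule approximates_prodM[OF assms(4)])
  have Z: "rv_fml Ms (A n) (Sup x \<phi>) \<in> unitA" for n
    using rv_fml_unitA[OF _ An] assms(1) by simp
  have "\<exists>b\<in>prodM Ms. \<forall>w.
      rv_fml Ms (A n) (Sup x \<phi>) w \<le> rv_fml Ms ((A n)(x := b)) \<phi> w + 1 / real (Suc n)" for n
    by (rule rv_fml_Sup_witness[OF assms(1) An]) simp
  then have witnesses: "\<forall>n. \<exists>b. b \<in> prodM Ms \<and>
      (\<forall>w. rv_fml Ms (A n) (Sup x \<phi>) w \<le> rv_fml Ms ((A n)(x := b)) \<phi> w + 1 / real (Suc n))"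
    by blast
  obtain bs where bs: "\<And>n. bs n \<in> prodM Ms"
    "\<And>n w. rv_fml Ms (A n) (Sup x \<phi>) w \<le> rv_fml Ms ((A n)(x := bs n)) \<phi> w + 1 / real (Suc n)"
    using choice[OF witnesses] by blast
  have lim: "limitin B.mtopology (\<lambda>n. fvalR R (\<tau>(x := cM (bs n))) \<phi>) v sequentially"
  proof (rule limitin_witness_values[OF assms(1,2,4,3) bs(1) Z v])
    show "\<bar>rv_fml Ms (A n) (Sup x \<phi>) w - rv_fml Ms ((A n)(x := bs n)) \<phi> w\<bar> \<le> 1 / real (Suc n)"
      for n w
      using bs(2)[of n w] rv_fml_Sup_upper[OF assms(1) An[of n] bs(1)[of n], where x = x and w = w] by simp
  qed
  show ?thesis
    by (rule leB_limit[OF _ _ lim, of "\<lambda>n. U"])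
      (use U cM_mainN[OF bs(1)] assms(3) fvalR_auxB[OF assms(2)] in auto)
qed

lemma limit_semantics_Sup:
  assumes "wf_fml L \<phi>" "limit_semantics \<phi>"
  shows "limit_semantics (Sup x \<phi>)"
  unfolding limit_semantics_def
proof (intro allI impI)
  fix \<tau> A
  assume \<tau>: "\<forall>i. \<tau> i \<in> mainN R" and A: "approximates A \<tau>"
  obtain v where v: "limitin B.mtopology (\<lambda>n. cA (rv_fml Ms (A n) (Sup x \<phi>))) v sequentially"
    using limitin_rv_fml_exists[of "Sup x \<phi>" A \<tau>] assms(1) A \<tau> by auto
  have "SupB R ((\<lambda>b. fvalR R (\<tau>(x := b)) \<phi>) ` mainN R) = v"
    by (rule SupB_eqI[OF B.limitin_mspace[OF v]])
      (use Sup_limit_upper_bound[OF assms \<tau> A v] Sup_limit_least_upper_bound[OF assms \<tau> A v] in auto)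
  then show "limitin B.mtopology (\<lambda>n. cA (rv_fml Ms (A n) (Sup x \<phi>))) (fvalR R \<tau> (Sup x \<phi>)) sequentially"
    using v by simp
qed

lemma Inf_limit_lower_bound:
  assumes "wf_fml L \<phi>" "limit_semantics \<phi>" "\<forall>i. \<tau> i \<in> mainN R" "approximates A \<tau>"
    and v: "limitin B.mtopology (\<lambda>n. cA (rv_fml Ms (A n) (Inf x \<phi>))) v sequentially"
    and "\<beta> \<in> mainN R"
  shows "leB R v (fvalR R (\<tau>(x := \<beta>)) \<phi>)"
proof -
  have An: "\<forall>i. A n i \<in> prodM Ms" for n
    by (rule approximates_prodM[OF assms(4)])
  have Z: "rv_fml Ms (A n) (Inf x \<phi>) \<in> unitA" for n
    using rv_fml_unitA[OF _ An] assms(1) by simp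
  obtain bs where bs: "\<And>n. bs n \<in> prodM Ms" "approximates (\<lambda>n. (A n)(x := bs n)) (\<tau>(x := \<beta>))"
    using approximates_update[OF assms(4,6)] by blast
  have unit: "rv_fml Ms ((A n)(x := bs n)) \<phi> \<in> unitA" for n
    using rv_fml_unitA[OF assms(1)] An bs(1) by simp
  show ?thesis
  proof (rule leB_limit[OF cA_auxB[OF Z] cA_auxB[OF unit] v])
    show "limitin B.mtopology (\<lambda>n. cA (rv_fml Ms ((A n)(x := bs n)) \<phi>)) (fvalR R (\<tau>(x := \<beta>)) \<phi>) sequentially"
      using limit_semanticsD[OF assms(2) _ bs(2)] assms(3,6) by simp
    show "leB R (cA (rv_fml Ms (A n) (Inf x \<phi>))) (cA (rv_fml Ms ((A n)(x := bs n)) \<phi>))" for n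
      by (rule leB_cA[OF Z unit rv_fml_Inf_lower[OF assms(1) An bs(1)]])
  qed
qed

lemma Inf_limit_greatest_lower_bound:
  assumes "wf_fml L \<phi>" "limit_semantics \<phi>" "\<forall>i. \<tau> i \<in> mainN R" "approximates A \<tau>"
    and v: "limitin B.mtopology (\<lambda>n. cA (rv_fml Ms (A n) (Inf x \<phi>))) v sequentially"
    and U: "U \<in> auxB R" "\<And>\<beta>. \<beta> \<in> mainN R \<Longrightarrow> leB R U (fvalR R (\<tau>(x := \<beta>)) \<phi>)"
  shows "leB R U v"
proof -
  have An: "\<forall>i. A n i \<in> prodM Ms" for n
    by (rule approximates_prodM[OF assms(4)])
  have Z: "rv_fml Ms (A n) (Inf x \<phi>) \<in> unitA" for n
    using rv_fml_unitA[OF _ An] assms(1) by simp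
  have "\<exists>b\<in>prodM Ms. \<forall>w.
      rv_fml Ms ((A n)(x := b)) \<phi> w \<le> rv_fml Ms (A n) (Inf x \<phi>) w + 1 / real (Suc n)" for n
    by (rule rv_fml_Inf_witness[OF assms(1) An]) simp
  then have witnesses: "\<forall>n. \<exists>b. b \<in> prodM Ms \<and>
      (\<forall>w. rv_fml Ms ((A n)(x := b)) \<phi> w \<le> rv_fml Ms (A n) (Inf x \<phi>) w + 1 / real (Suc n))"
    by blast
  obtain bs where bs: "\<And>n. bs n \<in> prodM Ms"
    "\<And>n w. rv_fml Ms ((A n)(x := bs n)) \<phi> w \<le> rv_fml Ms (A n) (Inf x \<phi>) w + 1 / real (Suc n)"
    using choice[OF witnesses] by blast
  have lim: "limitin B.mtopology (\<lambda>n. fvalR R (\<tau>(x := cM (bs n))) \<phi>) v sequentially"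
  proof (rule limitin_witness_values[OF assms(1,2,4,3) bs(1) Z v])
    show "\<bar>rv_fml Ms (A n) (Inf x \<phi>) w - rv_fml Ms ((A n)(x := bs n)) \<phi> w\<bar> \<le> 1 / real (Suc n)"
      for n w
      using bs(2)[of n w] rv_fml_Inf_lower[OF assms(1) An[of n] bs(1)[of n], where x = x and w = w] by simp
  qed
  show ?thesis
    by (rule leB_limit[OF _ _ _ lim, of "\<lambda>n. U"])
      (use U cM_mainN[OF bs(1)] assms(3) fvalR_auxB[OF assms(2)] in auto)
qed

lemma limit_semantics_Inf:
  assumes "wf_fml L \<phi>" "limit_semantics \<phi>"
  shows "limit_semantics (Inf x \<phi>)"
  unfolding limit_semantics_def
proof (intro allI impI)
  fix \<tau> A
  assume \<tau>: "\<forall>i. \<tau> i \<in> mainN R" and A: "approximates A \<tau>"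
  obtain v where v: "limitin B.mtopology (\<lambda>n. cA (rv_fml Ms (A n) (Inf x \<phi>))) v sequentially"
    using limitin_rv_fml_exists[of "Inf x \<phi>" A \<tau>] assms(1) A \<tau> by auto
  have "InfB R ((\<lambda>b. fvalR R (\<tau>(x := b)) \<phi>) ` mainN R) = v"
    by (rule InfB_eqI[OF B.limitin_mspace[OF v]])
      (use Inf_limit_lower_bound[OF assms \<tau> A v] Inf_limit_greatest_lower_bound[OF assms \<tau> A v] in auto)
  then show "limitin B.mtopology (\<lambda>n. cA (rv_fml Ms (A n) (Inf x \<phi>))) (fvalR R \<tau> (Inf x \<phi>)) sequentially"
    using v by simp
qed

theorem limit_semantics_fml: "wf_fml L \<phi> \<Longrightarrow> limit_semantics \<phi>"
proof (induction \<phi>)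
  case (Pred p ts)
  then show ?case
    by (rule limit_semantics_Pred)
next
  case (Dist t u)
  then show ?case
    by (rule limit_semantics_Dist)
next
  case Zero
  show ?case
    by (rule limit_semantics_Zero)
next
  case (Neg \<phi>)
  then show ?case
    by (intro limit_semantics_Neg) simp_all
next
  case (Half \<phi>)
  then show ?case
    by (intro limit_semantics_Half) simp_all
next
  case (Minus \<phi> \<psi>)
  then show ?case
    by (intro limit_semantics_Minus) simp_all
next
  case (Sup x \<phi>)
  then show ?case
    by (intro limit_semantics_Sup) simp_all
next
  case (Inf x \<phi>)
  then show ?case
    by (intro limit_semantics_Inf) simp_all
qed

corollary cA_rv_fml:
  assumes "wf_fml L \<phi>" "\<forall>i. as i \<in> prodM Ms"
  shows "cA (rv_fml Ms as \<phi>) = fvalR R (\<lambda>i. cM (as i)) \<phi>"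
proof -
  have "limitin B.mtopology (\<lambda>n. cA (rv_fml Ms as \<phi>)) (fvalR R (\<lambda>i. cM (as i)) \<phi>) sequentially"
    using limit_semanticsD[OF limit_semantics_fml[OF assms(1)] _ approximates_const[OF assms(2)]]
      cM_mainN assms(2) by simp
  moreover have "limitin B.mtopology (\<lambda>n. cA (rv_fml Ms as \<phi>)) (cA (rv_fml Ms as \<phi>)) sequentially"
    using cA_auxB[OF rv_fml_unitA[OF assms]] by simp
  ultimately show ?thesis
    using B.limitin_metric_unique trivial_limit_sequentially by blast
qed

end

theorem theorem3p19:
  fixes L :: "('f, 'p) csig"
    and Ms :: "'w \<Rightarrow> ('m, 'f, 'p) lstruc"
    and E :: "('w \<Rightarrow> real) \<Rightarrow> real"
    and R :: "('n, 'b, 'f, 'p) rstruc"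
    and cM :: "('w \<Rightarrow> 'm) \<Rightarrow> 'n"
    and cA :: "('w \<Rightarrow> real) \<Rightarrow> 'b"
  assumes "wf_csig L"
    and "\<forall>w. is_lstruc L (Ms w)"
    and "integration_functional E"
    and "is_assoc_struct L Ms E R cM cA"
  shows "full (prodM Ms) unitA \<and>
         (\<forall>\<phi> as. wf_fml L \<phi> \<longrightarrow> (\<forall>i. as i \<in> prodM Ms) \<longrightarrow>
            cA (rv_fml Ms as \<phi>) = fvalR R (\<lambda>i. cM (as i)) \<phi>)"
proof -
  interpret associated_structure E L Ms R cM cA
    by unfold_locales (use assms in auto)
  show ?thesis
    using full_prodM cA_rv_fml by blast
qed

end
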